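(* Under (LS) with $k=1$, (W) and (F1), for all $\underline s_1,\underline s_2\in\mathcal S$, $$\operatorname{Cov}\Big(\sum_{t=1}^Tw_{t,T}f(\underline s_1,\underline X_{t,T}),\sum_{t=1}^Tw_{t,T}f(\underline s_2,\underline X_{t,T})\Big)\longrightarrow\mathbf V(\underline s_1,\underline s_2)\qquad(T\to\infty),$$ where $\mathbf V(\underline s_1,\underline s_2)=\sum_{h\in\mathbb{Z}}\lim_{T\to\infty}\sum_{t=1}^Tw_{t,T}w_{t+h,T}\operatorname{Cov}(f(\underline s_1,\widetilde{\underline X}_0(t/T)),f(\underline s_2,\widetilde{\underline X}_h(t/T)))$.
   Context: (LS) with $k=1$: $\underline X_{t,T}=\underline\mu(t/T)+\sum_{j\in\mathbb{Z}}A_{t,T}(j)\underline\varepsilon_{t-j}$, $t=1,\dots,T$; $(\underline\varepsilon_t)$ i.i.d. centred in $\mathbb{R}^d$, $E|\underline\varepsilon_1|_1<\infty$; $\underline\mu$ continuously differentiable; for some $\vartheta\in(0,1)$, $B<\infty$: $\sup_{t,T}|A_{t,T}(j)|_1\le B\vartheta^{|j|}$ ($|M|_1=\max_j\sum_i|m^{(i,j)}|$); entrywise continuously differentiable $A(\cdot,j)=(a^{(p,q)}(\cdot,j)):[0,1]\to\mathbb{R}^{d\times d}$ with $\sup_u|a^{(p,q)}(u,j)|\le B\vartheta^{|j|}$, $\sup_u|\partial_ua^{(p,q)}(u,j)|\le B\vartheta^{|j|}$, $\sup_{t,T}T|A_{t,T}(j)-A(t/T,j)|_1\le B\vartheta^{|j|}$.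 $\widetilde{\underline X}_t(u)=\underline\mu(u)+\sum_jA(u,j)\underline\varepsilon_{t-j}$; truncations $\widetilde{\underline X}^{(M)}_t(u),\underline X^{(M)}_{t,T}$: sums over $|j|<M$. (W): weights $w_{t,T}\ge0$, $d_T:=\#\{t:w_{t,T}>0\}\to\infty$, $\sup_tw_{t,T}\le C_wd_T^{-1/2}$; weights with index outside $\{1,\dots,T\}$ are $0$. (F1): $(\mathcal S,\rho)$ compact semimetric, $\mathcal S\subseteq\overline{\mathbb{R}}^d$; $\sup_{\underline s}|f(\underline s,\underline x)-f(\underline s,\underline x^\circ)|\le C_{Lip}|\underline x-\underline x^\circ|_1$; for some $\delta\in(0,1/2)$, uniformly bounded $(2+\delta)$-th absolute moments of $f(\underline s,\underline X_{t,T}),f(\underline s,\underline X^{(M)}_{t,T})$ and of $f(\underline s,\widetilde{\underline X}_0(u)),f(\underline s,\widetilde{\underline X}^{(M)}_0(u))$. *)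

theory Defs
  imports "HOL-Probability.Probability"
begin

definition l1norm :: "real^'d \<Rightarrow> real" where
  "l1norm x = (\<Sum>i\<in>UNIV. \<bar>x $ i\<bar>)"

text \<open>Matrix norm: max over columns j of the column sums of absolute values.
  A matrix is an element of real^'d^'d, entry (i,j) is A $ i $ j.\<close>
definition mnorm1 :: "real^'d^'d \<Rightarrow> real" where
  "mnorm1 A = Max (range (\<lambda>j. \<Sum>i\<in>UNIV. \<bar>A $ i $ j\<bar>))"

definition C1_on_unit_with :: "(real \<Rightarrow> 'a::real_normed_vector) \<Rightarrow> (real \<Rightarrow> 'a) \<Rightarrow> bool" where
  "C1_on_unit_with g D \<longleftrightarrow>
     (\<forall>u\<in>{0..1}. (g has_vector_derivative D u) (at u within {0..1})) \<and> continuous_on {0..1} D"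

definition LSX :: "(real \<Rightarrow> real^'d) \<Rightarrow> (nat \<Rightarrow> int \<Rightarrow> int \<Rightarrow> real^'d^'d)
     \<Rightarrow> (int \<Rightarrow> 'w \<Rightarrow> real^'d) \<Rightarrow> nat \<Rightarrow> int \<Rightarrow> 'w \<Rightarrow> real^'d" where
  "LSX \<mu> At \<epsilon> T t \<omega> = \<mu> (real_of_int t / real T) + (\<Sum>\<^sub>\<infinity>j\<in>UNIV. At T t j *v \<epsilon> (t - j) \<omega>)"

definition LSX_trunc :: "(real \<Rightarrow> real^'d) \<Rightarrow> (nat \<Rightarrow> int \<Rightarrow> int \<Rightarrow> real^'d^'d)
     \<Rightarrow> (int \<Rightarrow> 'w \<Rightarrow> real^'d) \<Rightarrow> nat \<Rightarrow> nat \<Rightarrow> int \<Rightarrow> 'w \<Rightarrow> real^'d" where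
  "LSX_trunc \<mu> At \<epsilon> M T t \<omega> = \<mu> (real_of_int t / real T)
      + (\<Sum>j\<in>{j. \<bar>j\<bar> < int M}. At T t j *v \<epsilon> (t - j) \<omega>)"

definition SX :: "(real \<Rightarrow> real^'d) \<Rightarrow> (real \<Rightarrow> int \<Rightarrow> real^'d^'d)
     \<Rightarrow> (int \<Rightarrow> 'w \<Rightarrow> real^'d) \<Rightarrow> real \<Rightarrow> int \<Rightarrow> 'w \<Rightarrow> real^'d" where
  "SX \<mu> A \<epsilon> u t \<omega> = \<mu> u + (\<Sum>\<^sub>\<infinity>j\<in>UNIV. A u j *v \<epsilon> (t - j) \<omega>)"

definition SX_trunc :: "(real \<Rightarrow> real^'d) \<Rightarrow> (real \<Rightarrow> int \<Rightarrow> real^'d^'d)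
     \<Rightarrow> (int \<Rightarrow> 'w \<Rightarrow> real^'d) \<Rightarrow> nat \<Rightarrow> real \<Rightarrow> int \<Rightarrow> 'w \<Rightarrow> real^'d" where
  "SX_trunc \<mu> A \<epsilon> M u t \<omega> = \<mu> u + (\<Sum>j\<in>{j. \<bar>j\<bar> < int M}. A u j *v \<epsilon> (t - j) \<omega>)"

definition Cov :: "'w measure \<Rightarrow> ('w \<Rightarrow> real) \<Rightarrow> ('w \<Rightarrow> real) \<Rightarrow> real" where
  "Cov M X Y = (\<integral>\<omega>. (X \<omega> - (\<integral>\<omega>'. X \<omega>' \<partial>M)) * (Y \<omega> - (\<integral>\<omega>'. Y \<omega>' \<partial>M)) \<partial>M)"

definition compact_semimetric :: "'s set \<Rightarrow> ('s \<Rightarrow> 's \<Rightarrow> real) \<Rightarrow> bool" where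
  "compact_semimetric S \<rho> \<longleftrightarrow>
     (\<forall>x\<in>S. \<rho> x x = 0) \<and> (\<forall>x\<in>S. \<forall>y\<in>S. \<rho> x y \<ge> 0 \<and> \<rho> x y = \<rho> y x) \<and>
     (\<forall>x\<in>S. \<forall>y\<in>S. \<forall>z\<in>S. \<rho> x z \<le> \<rho> x y + \<rho> y z) \<and>
     (\<forall>s::nat \<Rightarrow> 's. (\<forall>n. s n \<in> S) \<longrightarrow>
        (\<exists>(r::nat \<Rightarrow> nat) x. strict_mono r \<and> x \<in> S \<and> (\<lambda>n. \<rho> (s (r n)) x) \<longlonglongrightarrow> 0))"

end

theory Submission
  imports Defs
begin

(* By bilinearity the covariance of the weighted sums is the sum over lags h of
   cov_lag T h = sum_t w_t w_(t+h) Cov(f(s1, X_t), f(s2, X_(t+h))).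
   Truncating the moving-average representation at |h|/2 leaves two variables that depend on
   disjoint blocks of the i.i.d. innovations, hence are uncorrelated; since the truncation error
   is geometrically small in L1 and the (2+delta)-th moments are bounded, |cov_lag T h| decays
   geometrically in |h| uniformly in T. For fixed h, replacing X_(t,T) by the stationary
   approximation at u = t/T costs O(1/T) in L1, so cov_lag T h has the same limit L h as the
   stationary lag sums, and dominated convergence over h gives the claim. *)

lemma l1norm_nonneg: "0 \<le> l1norm x"
  unfolding l1norm_def by (simp add: sum_nonneg)

lemma l1norm_zero [simp]: "l1norm 0 = 0"
  unfolding l1norm_def by simp

lemma l1norm_triangle: "l1norm (x + y) \<le> l1norm x + l1norm y"
  unfolding l1norm_def by (simp add: sum.distrib[symmetric] sum_mono abs_triangle_ineq)

lemma l1norm_sum_le: "finite F \<Longrightarrow> l1norm (sum f F) \<le> (\<Sum>j\<in>F. l1norm (f j))"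
  by (induction F rule: finite_induct) (auto intro: order_trans[OF l1norm_triangle])

lemma norm_le_l1norm: "norm x \<le> l1norm x"
  unfolding l1norm_def by (rule norm_le_l1_cart)

lemma l1norm_le_card_norm: "l1norm (x::real^'d) \<le> real CARD('d) * norm x"
proof -
  have "l1norm x \<le> (\<Sum>i\<in>(UNIV::'d set). norm x)"
    unfolding l1norm_def by (intro sum_mono) (simp add: component_le_norm_cart)
  then show ?thesis by simp
qed

lemma continuous_on_l1norm: "continuous_on UNIV (l1norm :: real^'d \<Rightarrow> real)"
  unfolding l1norm_def[abs_def] by (intro continuous_intros)

lemma borel_measurable_l1norm [measurable]: "(l1norm :: real^'d \<Rightarrow> real) \<in> borel_measurable borel"
  by (rule borel_measurable_continuous_onI[OF continuous_on_l1norm])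

lemma column_sum_le_mnorm1: "(\<Sum>i\<in>UNIV. \<bar>A $ i $ j\<bar>) \<le> mnorm1 A"
  unfolding mnorm1_def by (rule Max_ge) auto

lemma mnorm1_nonneg: "0 \<le> mnorm1 A"
  by (rule order_trans[OF _ column_sum_le_mnorm1]) (simp add: sum_nonneg)

lemma mnorm1_le_card_mult:
  assumes "\<And>i j. \<bar>A $ i $ j\<bar> \<le> b"
  shows "mnorm1 (A::real^'d^'d) \<le> real CARD('d) * b"
proof -
  have "(\<Sum>i\<in>UNIV. \<bar>A $ i $ j\<bar>) \<le> real CARD('d) * b" for j
    using sum_mono[of UNIV "\<lambda>i. \<bar>A $ i $ j\<bar>" "\<lambda>_. b"] assms by simp
  then show ?thesis unfolding mnorm1_def by (subst Max_le_iff) auto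
qed

lemma mnorm1_zero [simp]: "mnorm1 (0::real^'d^'d) = 0"
  using mnorm1_le_card_mult[of "0::real^'d^'d" 0] mnorm1_nonneg[of "0::real^'d^'d"] by simp

lemma mnorm1_triangle: "mnorm1 (A + B) \<le> mnorm1 A + mnorm1 B"
proof -
  have "(\<Sum>i\<in>UNIV. \<bar>A $ i $ j + B $ i $ j\<bar>) \<le> mnorm1 A + mnorm1 B" for j
  proof -
    have "(\<Sum>i\<in>UNIV. \<bar>A $ i $ j + B $ i $ j\<bar>) \<le> (\<Sum>i\<in>UNIV. \<bar>A $ i $ j\<bar>) + (\<Sum>i\<in>UNIV. \<bar>B $ i $ j\<bar>)"
      by (simp add: sum.distrib[symmetric] sum_mono abs_triangle_ineq)
    also have "\<dots> \<le> mnorm1 A + mnorm1 B"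
      by (intro add_mono column_sum_le_mnorm1)
    finally show ?thesis .
  qed
  then show ?thesis unfolding mnorm1_def[of "A + B"] by (subst Max_le_iff) auto
qed

lemma l1norm_mult_vec_le: "l1norm (A *v x) \<le> mnorm1 A * l1norm x"
proof -
  have "l1norm (A *v x) = (\<Sum>i\<in>UNIV. \<bar>\<Sum>j\<in>UNIV. A $ i $ j * x $ j\<bar>)"
    unfolding l1norm_def by (simp add: matrix_vector_mult_def)
  also have "\<dots> \<le> (\<Sum>i\<in>UNIV. \<Sum>j\<in>UNIV. \<bar>A $ i $ j\<bar> * \<bar>x $ j\<bar>)"
    by (intro sum_mono order_trans[OF sum_abs]) (simp add: abs_mult)
  also have "\<dots> = (\<Sum>j\<in>UNIV. (\<Sum>i\<in>UNIV. \<bar>A $ i $ j\<bar>) * \<bar>x $ j\<bar>)"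
    by (subst sum.swap) (simp add: sum_distrib_right)
  also have "\<dots> \<le> (\<Sum>j\<in>UNIV. mnorm1 A * \<bar>x $ j\<bar>)"
    by (intro sum_mono mult_right_mono column_sum_le_mnorm1) auto
  also have "\<dots> = mnorm1 A * l1norm x"
    unfolding l1norm_def by (simp add: sum_distrib_left)
  finally show ?thesis .
qed

lemma borel_measurable_mult_vec [measurable]:
  fixes A :: "real^'d^'d"
  assumes "f \<in> borel_measurable N"
  shows "(\<lambda>x. A *v f x) \<in> borel_measurable N"
  using measurable_compose[OF assms borel_measurable_continuous_onI[OF matrix_vector_mult_linear_continuous_on]] .

lemma summable_on_sum_finite:
  fixes g :: "'i \<Rightarrow> 'a \<Rightarrow> real"
  assumes "finite I" "\<And>i. i \<in> I \<Longrightarrow> g i summable_on A"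
  shows "(\<lambda>x. \<Sum>i\<in>I. g i x) summable_on A"
  using assms by (induction I rule: finite_induct) (auto intro!: summable_on_add)

lemma summable_on_cart_iff_norm:
  fixes f :: "'a \<Rightarrow> real^'d"
  shows "f summable_on A \<longleftrightarrow> (\<lambda>x. norm (f x)) summable_on A"
proof
  assume "f summable_on A"
  then have "(\<lambda>x. f x $ i) summable_on A" for i
    by (rule summable_on_bounded_linear[OF bounded_linear_vec_nth])
  then have "(\<lambda>x. \<bar>f x $ i\<bar>) summable_on A" for i
    using summable_on_iff_abs_summable_on_real[of "\<lambda>x. f x $ i" A] by simp
  then have "(\<lambda>x. \<Sum>i\<in>UNIV. \<bar>f x $ i\<bar>) summable_on A"
    by (intro summable_on_sum_finite) auto
  then show "(\<lambda>x. norm (f x)) summable_on A"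
    by (rule summable_on_comparison_test) (auto intro: norm_le_l1_cart)
qed (rule abs_summable_summable)

lemma filterlim_symmetric_intervals_int:
  "filterlim (\<lambda>n::nat. {-int n..int n}) (finite_subsets_at_top (UNIV::int set)) sequentially"
  unfolding filterlim_finite_subsets_at_top
proof (intro allI impI, elim conjE)
  fix X :: "int set" assume "finite X"
  then obtain N where "\<forall>x\<in>X. nat \<bar>x\<bar> \<le> N"
    using finite_nat_set_iff_bounded_le[of "(\<lambda>x. nat \<bar>x\<bar>) ` X"] by auto
  then show "\<forall>\<^sub>F n in sequentially. finite {- int n..int n} \<and> X \<subseteq> {- int n..int n} \<and> {- int n..int n} \<subseteq> UNIV"
    by (intro eventually_sequentiallyI[of N]) force
qed

lemma has_sum_imp_symmetric_sums_tendsto: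
  assumes "(f has_sum s) (UNIV::int set)"
  shows "(\<lambda>n. sum f {-int n..int n}) \<longlonglongrightarrow> s"
  using filterlim_compose[OF assms[unfolded has_sum_def] filterlim_symmetric_intervals_int]
  by (simp add: o_def)

lemma summable_on_int_iff_bounded_symmetric_sums:
  fixes f :: "int \<Rightarrow> real^'d"
  shows "f summable_on UNIV \<longleftrightarrow> (\<exists>B. \<forall>n::nat. (\<Sum>j\<in>{-int n..int n}. norm (f j)) \<le> B)"
proof
  assume "f summable_on UNIV"
  then have "(\<lambda>j. norm (f j)) summable_on UNIV" by (simp add: summable_on_cart_iff_norm)
  then have "(\<Sum>j\<in>{-int n..int n}. norm (f j)) \<le> infsum (\<lambda>j. norm (f j)) UNIV" for n :: nat
    by (rule finite_sum_le_infsum) auto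
  then show "\<exists>B. \<forall>n::nat. (\<Sum>j\<in>{-int n..int n}. norm (f j)) \<le> B" by blast
next
  assume "\<exists>B. \<forall>n::nat. (\<Sum>j\<in>{-int n..int n}. norm (f j)) \<le> B"
  then obtain B where B: "\<And>n::nat. (\<Sum>j\<in>{-int n..int n}. norm (f j)) \<le> B" by blast
  have "sum (\<lambda>j. norm (f j)) F \<le> B" if "finite F" for F
  proof -
    obtain n :: nat where "\<forall>x\<in>(\<lambda>x. nat \<bar>x\<bar>) ` F. x \<le> n"
      using \<open>finite F\<close> finite_nat_set_iff_bounded_le[of "(\<lambda>x. nat \<bar>x\<bar>) ` F"] by auto
    then have "F \<subseteq> {-int n..int n}" by force
    then have "sum (\<lambda>j. norm (f j)) F \<le> (\<Sum>j\<in>{-int n..int n}. norm (f j))"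
      by (rule sum_mono2[rotated]) auto
    then show ?thesis using B[of n] by linarith
  qed
  then have "(\<lambda>j. norm (f j)) summable_on UNIV"
    by (intro nonneg_bdd_above_summable_on) (auto simp: bdd_above_def)
  then show "f summable_on UNIV" by (simp add: summable_on_cart_iff_norm)
qed

lemma borel_measurable_infsum_cart:
  fixes X :: "int \<Rightarrow> 'a \<Rightarrow> real^'d"
  assumes [measurable]: "\<And>j. X j \<in> borel_measurable N"
  shows "(\<lambda>\<omega>. infsum (\<lambda>j. X j \<omega>) UNIV) \<in> borel_measurable N"
proof -
  \<comment> \<open>Summability is a countable condition, so the set where the sum is not junk is measurable.\<close>
  define P where "P \<omega> \<longleftrightarrow> (\<exists>B::nat. \<forall>n::nat. (\<Sum>j\<in>{-int n..int n}. norm (X j \<omega>)) \<le> real B)" for \<omega>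
  have summable_iff_P: "(\<lambda>j. X j \<omega>) summable_on UNIV \<longleftrightarrow> P \<omega>" for \<omega>
    unfolding P_def summable_on_int_iff_bounded_symmetric_sums
    by (meson order_trans real_arch_simple)
  have [measurable]: "Measurable.pred N P"
    unfolding P_def by measurable
  define F where "F n \<omega> = (if P \<omega> then (\<Sum>j\<in>{-int n..int n}. X j \<omega>) else 0)" for n \<omega>
  show ?thesis
  proof (rule borel_measurable_LIMSEQ_metric[of F])
    show "F n \<in> borel_measurable N" for n unfolding F_def by measurable
    show "(\<lambda>n. F n \<omega>) \<longlonglongrightarrow> infsum (\<lambda>j. X j \<omega>) UNIV" for \<omega>
      using has_sum_imp_symmetric_sums_tendsto[OF has_sum_infsum, of "\<lambda>j. X j \<omega>"]
      by (cases "P \<omega>") (auto simp: F_def summable_iff_P infsum_not_exists)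
  qed
qed

lemma summable_infsum_int_le_twice_suminf:
  fixes g :: "int \<Rightarrow> real" and \<phi> :: "nat \<Rightarrow> real"
  assumes g_nonneg: "\<And>j. 0 \<le> g j" and g_le: "\<And>j. g j \<le> \<phi> (nat \<bar>j\<bar>)" and "summable \<phi>"
  shows "g summable_on UNIV" "infsum g UNIV \<le> 2 * suminf \<phi>"
proof -
  have \<phi>_nonneg: "0 \<le> \<phi> n" for n using g_nonneg[of "int n"] g_le[of "int n"] by simp
  have half: "sum g G \<le> suminf \<phi>" if "finite G" "G \<subseteq> {0..} \<or> G \<subseteq> {..<0}" for G
  proof -
    have inj: "inj_on (\<lambda>j. nat \<bar>j\<bar>) G"
      using that(2) by (elim disjE) (auto simp: inj_on_def subset_eq eq_nat_nat_iff abs_if split: if_splits)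
    have "sum g G \<le> sum (\<lambda>j. \<phi> (nat \<bar>j\<bar>)) G" by (intro sum_mono g_le)
    also have "\<dots> = sum \<phi> ((\<lambda>j. nat \<bar>j\<bar>) ` G)"
      by (simp add: sum.reindex[OF inj])
    also have "\<dots> \<le> suminf \<phi>"
      using that(1) \<open>summable \<phi>\<close> by (intro sum_le_suminf) (auto simp: \<phi>_nonneg)
    finally show ?thesis .
  qed
  have finite_sums: "sum g F \<le> 2 * suminf \<phi>" if "finite F" for F
  proof -
    have "sum g F = sum g (F \<inter> {0..} \<union> F \<inter> {..<0})"
      by (rule arg_cong[where f = "sum g"]) auto
    also have "\<dots> = sum g (F \<inter> {0..}) + sum g (F \<inter> {..<0})"
      using that by (intro sum.union_disjoint) auto
    finally show ?thesis using half[of "F \<inter> {0..}"] half[of "F \<inter> {..<0}"] that by auto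
  qed
  show summable: "g summable_on UNIV"
    using g_nonneg finite_sums by (intro nonneg_bdd_above_summable_on) (auto simp: bdd_above_def)
  show "infsum g UNIV \<le> 2 * suminf \<phi>"
    by (rule infsum_le_finite_sums[OF summable finite_sums])
qed

lemma summable_infsum_geometric_tail_int:
  fixes \<theta> :: real
  assumes "0 < \<theta>" "\<theta> < 1"
  shows "(\<lambda>j::int. if int m \<le> \<bar>j\<bar> then \<theta> ^ nat \<bar>j\<bar> else 0) summable_on UNIV"
    and "infsum (\<lambda>j::int. if int m \<le> \<bar>j\<bar> then \<theta> ^ nat \<bar>j\<bar> else 0) UNIV \<le> 2 * \<theta> ^ m / (1 - \<theta>)"
proof -
  define \<phi> where "\<phi> n = (if m \<le> n then \<theta> ^ n else 0)" for n
  have "(\<lambda>n. \<theta> ^ n * \<theta> ^ m) sums (1 / (1 - \<theta>) * \<theta> ^ m)"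
    using assms by (intro sums_mult2 geometric_sums) auto
  then have "(\<lambda>n. \<phi> (n + m)) sums (\<theta> ^ m / (1 - \<theta>))"
    by (simp add: \<phi>_def power_add mult.commute)
  then have \<phi>_sums: "\<phi> sums (\<theta> ^ m / (1 - \<theta>))"
    by (subst (asm) sums_iff_shift) (simp add: \<phi>_def)
  note bound = summable_infsum_int_le_twice_suminf[where \<phi> = \<phi>]
  show "(\<lambda>j::int. if int m \<le> \<bar>j\<bar> then \<theta> ^ nat \<bar>j\<bar> else 0) summable_on UNIV"
    using \<phi>_sums assms by (intro bound(1)) (auto simp: \<phi>_def sums_summable le_nat_iff)
  have "infsum (\<lambda>j::int. if int m \<le> \<bar>j\<bar> then \<theta> ^ nat \<bar>j\<bar> else 0) UNIV \<le> 2 * suminf \<phi>"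
    using \<phi>_sums assms by (intro bound(2)) (auto simp: \<phi>_def sums_summable le_nat_iff)
  then show "infsum (\<lambda>j::int. if int m \<le> \<bar>j\<bar> then \<theta> ^ nat \<bar>j\<bar> else 0) UNIV \<le> 2 * \<theta> ^ m / (1 - \<theta>)"
    using sums_unique[OF \<phi>_sums] by simp
qed

lemma summable_infsum_geometric_int:
  fixes \<theta> c :: real
  assumes "0 < \<theta>" "\<theta> < 1" "0 \<le> c"
  shows "(\<lambda>j::int. c * \<theta> ^ nat \<bar>j\<bar>) summable_on UNIV"
    and "infsum (\<lambda>j::int. c * \<theta> ^ nat \<bar>j\<bar>) UNIV \<le> c * (2 / (1 - \<theta>))"
proof -
  note geometric = summable_infsum_geometric_tail_int[OF assms(1,2), of 0, simplified]
  show "(\<lambda>j::int. c * \<theta> ^ nat \<bar>j\<bar>) summable_on UNIV"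
    by (rule summable_on_cmult_right[OF geometric(1)])
  show "infsum (\<lambda>j::int. c * \<theta> ^ nat \<bar>j\<bar>) UNIV \<le> c * (2 / (1 - \<theta>))"
    using mult_left_mono[OF geometric(2) assms(3)] by (simp add: infsum_cmult_right[OF geometric(1)])
qed

lemma tendsto_infsum_dominated:
  fixes g :: "nat \<Rightarrow> 'a \<Rightarrow> real" and L \<beta> :: "'a \<Rightarrow> real"
  assumes \<beta>_summable: "\<beta> summable_on UNIV" and g_le: "\<And>T h. \<bar>g T h\<bar> \<le> \<beta> h"
    and g_lim: "\<And>h. (\<lambda>T. g T h) \<longlonglongrightarrow> L h"
  shows "L summable_on UNIV" "(\<lambda>T. infsum (g T) UNIV) \<longlonglongrightarrow> infsum L UNIV"
proof -
  \<comment> \<open>Dominated convergence on the counting measure, where absolutely summable means integrable.\<close>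
  have count_space_integral: "integrable (count_space UNIV) \<phi> \<and> integral\<^sup>L (count_space UNIV) \<phi> = infsum \<phi> UNIV"
    if "(\<lambda>h. \<bar>\<phi> h\<bar>) summable_on UNIV" for \<phi> :: "'a \<Rightarrow> real"
  proof -
    have "Infinite_Set_Sum.abs_summable_on \<phi> UNIV"
      using abs_summable_equivalent[of \<phi> UNIV] that by simp
    then show ?thesis
      using infsetsum_infsum unfolding Infinite_Set_Sum.abs_summable_on_def infsetsum_def by auto
  qed
  have L_le: "\<bar>L h\<bar> \<le> \<beta> h" for h
    using tendsto_rabs[OF g_lim] by (rule LIMSEQ_le_const2) (use g_le in auto)
  have abs_L: "(\<lambda>h. \<bar>L h\<bar>) summable_on UNIV"
    by (rule summable_on_comparison_test[OF \<beta>_summable]) (use L_le in auto)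
  have abs_g: "(\<lambda>h. \<bar>g T h\<bar>) summable_on UNIV" for T
    by (rule summable_on_comparison_test[OF \<beta>_summable]) (use g_le in auto)
  have "0 \<le> \<beta> h" for h
    using g_le[of 0 h] by linarith
  then have abs_\<beta>: "(\<lambda>h. \<bar>\<beta> h\<bar>) summable_on UNIV"
    using \<beta>_summable by simp
  show "L summable_on UNIV"
    using abs_L summable_on_iff_abs_summable_on_real[of L UNIV] by simp
  have "(\<lambda>T. integral\<^sup>L (count_space UNIV) (g T)) \<longlonglongrightarrow> integral\<^sup>L (count_space UNIV) L"
    using count_space_integral[OF abs_\<beta>] g_lim g_le
    by (intro integral_dominated_convergence[where w = \<beta>]) auto
  then show "(\<lambda>T. infsum (g T) UNIV) \<longlonglongrightarrow> infsum L UNIV"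
    using count_space_integral[OF abs_g] count_space_integral[OF abs_L] by simp
qed

lemma abs_le_one_plus_abs_powr:
  fixes x p :: real
  assumes "1 \<le> p"
  shows "\<bar>x\<bar> \<le> 1 + \<bar>x\<bar> powr p"
proof (cases "\<bar>x\<bar> \<le> 1")
  case False
  then have "\<bar>x\<bar> powr 1 \<le> \<bar>x\<bar> powr p" using assms by (intro powr_mono) auto
  then show ?thesis using False by simp
qed (simp add: add_increasing2)

lemma square_le_one_plus_abs_powr:
  fixes x p :: real
  assumes "2 \<le> p"
  shows "x\<^sup>2 \<le> 1 + \<bar>x\<bar> powr p"
proof (cases "\<bar>x\<bar> \<le> 1")
  case True
  then have "x\<^sup>2 \<le> 1" by (simp add: abs_square_le_1)
  then show ?thesis by (simp add: add_increasing2)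
next
  case False
  then have "\<bar>x\<bar> powr 2 \<le> \<bar>x\<bar> powr p" using assms by (intro powr_mono) auto
  then show ?thesis using False by (simp add: powr_numeral)
qed

lemma abs_mult_le_two_plus_abs_powr:
  fixes x y p :: real
  assumes "2 \<le> p"
  shows "\<bar>x * y\<bar> \<le> 2 + \<bar>x\<bar> powr p + \<bar>y\<bar> powr p"
proof -
  have "2 * \<bar>x * y\<bar> \<le> x\<^sup>2 + y\<^sup>2"
    using sum_squares_bound[of "\<bar>x\<bar>" "\<bar>y\<bar>"] by (simp add: abs_mult)
  then have "\<bar>x * y\<bar> \<le> x\<^sup>2 + y\<^sup>2" by simp
  then show ?thesis
    using square_le_one_plus_abs_powr[OF assms, of x] square_le_one_plus_abs_powr[OF assms, of y] by linarith
qed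

lemma abs_mult_le_powr_if_large:
  fixes u v R \<delta> :: real
  assumes "0 < R" "R < \<bar>v\<bar>" "0 < \<delta>"
  shows "\<bar>u\<bar> * \<bar>v\<bar> \<le> R powr (-\<delta>) * (\<bar>u\<bar> powr (2 + \<delta>) + \<bar>v\<bar> powr (2 + \<delta>))"
proof -
  define a where "a = max \<bar>u\<bar> \<bar>v\<bar>"
  have a: "0 < a" "\<bar>u\<bar> \<le> a" "\<bar>v\<bar> \<le> a" using assms by (auto simp: a_def)
  have "\<bar>u\<bar> * \<bar>v\<bar> * R powr \<delta> \<le> \<bar>u\<bar> * \<bar>v\<bar> * \<bar>v\<bar> powr \<delta>"
    using assms by (intro mult_left_mono powr_mono2) auto
  also have "\<dots> = \<bar>u\<bar> * \<bar>v\<bar> powr (1 + \<delta>)" using assms by (simp add: powr_add)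
  also have "\<dots> \<le> a powr 1 * a powr (1 + \<delta>)"
    using a assms by (intro mult_mono powr_mono2) auto
  also have "\<dots> = a powr (2 + \<delta>)" by (simp only: powr_add[symmetric]) simp
  also have "\<dots> \<le> \<bar>u\<bar> powr (2 + \<delta>) + \<bar>v\<bar> powr (2 + \<delta>)"
    by (cases "\<bar>u\<bar> \<le> \<bar>v\<bar>") (auto simp: a_def max_def)
  finally have "\<bar>u\<bar> * \<bar>v\<bar> \<le> (\<bar>u\<bar> powr (2 + \<delta>) + \<bar>v\<bar> powr (2 + \<delta>)) / R powr \<delta>"
    using assms by (simp add: pos_le_divide_eq)
  then show ?thesis using assms by (simp add: powr_minus divide_inverse mult.commute)
qed

text \<open>Truncating \<open>v\<close> at level \<open>R\<close>: the bounded part costs \<open>R \<bar>d\<bar>\<close>, the tail is paid for by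
  \<open>(2 + \<delta>)\<close>-th moments with the small factor \<open>R powr (-\<delta>)\<close>.\<close>

lemma abs_mult_le_truncation_bound:
  fixes d u u' v R \<delta> :: real
  assumes "\<bar>d\<bar> \<le> \<bar>u\<bar> + \<bar>u'\<bar>" "0 < R" "0 < \<delta>"
  shows "\<bar>d * v\<bar> \<le> R * \<bar>d\<bar> + R powr (-\<delta>) * (\<bar>u\<bar> powr (2 + \<delta>) + \<bar>u'\<bar> powr (2 + \<delta>) + 2 * \<bar>v\<bar> powr (2 + \<delta>))"
proof (cases "\<bar>v\<bar> \<le> R")
  case True
  then have "\<bar>d * v\<bar> \<le> R * \<bar>d\<bar>"
    using mult_left_mono[OF True abs_ge_zero[of d]] by (simp add: abs_mult mult.commute)
  then show ?thesis by (simp add: add_increasing2)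
next
  case False
  have "\<bar>d * v\<bar> \<le> \<bar>u\<bar> * \<bar>v\<bar> + \<bar>u'\<bar> * \<bar>v\<bar>"
    using assms(1) by (simp add: abs_mult distrib_right[symmetric] mult_right_mono)
  also have "\<dots> \<le> R powr (-\<delta>) * (\<bar>u\<bar> powr (2 + \<delta>) + \<bar>v\<bar> powr (2 + \<delta>))
      + R powr (-\<delta>) * (\<bar>u'\<bar> powr (2 + \<delta>) + \<bar>v\<bar> powr (2 + \<delta>))"
    using False assms by (intro add_mono abs_mult_le_powr_if_large) auto
  finally show ?thesis
    using assms(2) by (simp add: algebra_simps add_increasing)
qed

definition abs_moment_2_plus :: "'w measure \<Rightarrow> real \<Rightarrow> ('w \<Rightarrow> real) \<Rightarrow> ennreal" where
  "abs_moment_2_plus M \<delta> U = (\<integral>\<^sup>+\<omega>. ennreal (\<bar>U \<omega>\<bar> powr (2 + \<delta>)) \<partial>M)"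

lemma Cov_commute: "Cov M U V = Cov M V U"
  unfolding Cov_def by (simp add: mult.commute)

context prob_space
begin

context
  fixes U :: "'a \<Rightarrow> real" and \<delta> K :: real
  assumes U [measurable]: "U \<in> borel_measurable M"
    and moment_U: "abs_moment_2_plus M \<delta> U \<le> ennreal K"
    and K: "0 \<le> K" and \<delta>: "0 < \<delta>"
begin

lemma integrable_abs_powr_of_moment: "integrable M (\<lambda>\<omega>. \<bar>U \<omega>\<bar> powr (2 + \<delta>))"
  using moment_U by (intro integrableI_nonneg) (auto simp: abs_moment_2_plus_def top_unique less_top[symmetric])

lemma integral_abs_powr_le_of_moment: "(\<integral>\<omega>. \<bar>U \<omega>\<bar> powr (2 + \<delta>) \<partial>M) \<le> K"
  using moment_U K by (intro integral_real_bounded) (auto simp: abs_moment_2_plus_def)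

lemma integrable_of_moment: "integrable M U"
  by (rule Bochner_Integration.integrable_bound[where f = "\<lambda>\<omega>. 1 + \<bar>U \<omega>\<bar> powr (2 + \<delta>)"])
     (use integrable_abs_powr_of_moment abs_le_one_plus_abs_powr \<delta> in auto)

lemma integral_abs_le_of_moment: "(\<integral>\<omega>. \<bar>U \<omega>\<bar> \<partial>M) \<le> 1 + K"
proof -
  have "(\<integral>\<omega>. \<bar>U \<omega>\<bar> \<partial>M) \<le> (\<integral>\<omega>. 1 + \<bar>U \<omega>\<bar> powr (2 + \<delta>) \<partial>M)"
    using integrable_abs_powr_of_moment integrable_of_moment \<delta>
    by (intro integral_mono abs_le_one_plus_abs_powr) auto
  also have "\<dots> = 1 + (\<integral>\<omega>. \<bar>U \<omega>\<bar> powr (2 + \<delta>) \<partial>M)"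
    using integrable_abs_powr_of_moment by (simp add: prob_space)
  finally show ?thesis using integral_abs_powr_le_of_moment by linarith
qed

end

lemma integrable_mult_of_moments:
  assumes [measurable]: "U \<in> borel_measurable M" "V \<in> borel_measurable M"
    and "abs_moment_2_plus M \<delta> U \<le> ennreal K" "abs_moment_2_plus M \<delta> V \<le> ennreal K"
    and "0 \<le> K" "0 < \<delta>"
  shows "integrable M (\<lambda>\<omega>. U \<omega> * V \<omega>)"
proof (rule Bochner_Integration.integrable_bound)
  show "integrable M (\<lambda>\<omega>. 2 + \<bar>U \<omega>\<bar> powr (2 + \<delta>) + \<bar>V \<omega>\<bar> powr (2 + \<delta>))"
    using integrable_abs_powr_of_moment[of U \<delta> K] integrable_abs_powr_of_moment[of V \<delta> K] assms by auto
  show "AE \<omega> in M. norm (U \<omega> * V \<omega>) \<le> norm (2 + \<bar>U \<omega>\<bar> powr (2 + \<delta>) + \<bar>V \<omega>\<bar> powr (2 + \<delta>))"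
    using abs_mult_le_two_plus_abs_powr[of "2 + \<delta>"] assms by auto
qed auto

lemma Cov_eq_integral_mult_diff:
  assumes "integrable M U" "integrable M V" "integrable M (\<lambda>\<omega>. U \<omega> * V \<omega>)"
  shows "Cov M U V = (\<integral>\<omega>. U \<omega> * V \<omega> \<partial>M) - (\<integral>\<omega>. U \<omega> \<partial>M) * (\<integral>\<omega>. V \<omega> \<partial>M)"
proof -
  let ?a = "\<integral>\<omega>. U \<omega> \<partial>M" and ?b = "\<integral>\<omega>. V \<omega> \<partial>M"
  have "Cov M U V = (\<integral>\<omega>. (U \<omega> * V \<omega> - ?b * U \<omega>) - (?a * V \<omega> - ?a * ?b) \<partial>M)"
    unfolding Cov_def by (rule arg_cong[where f = "integral\<^sup>L M"]) (auto simp: algebra_simps)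
  also have "\<dots> = (\<integral>\<omega>. U \<omega> * V \<omega> \<partial>M) - ?b * ?a - (?a * ?b - ?a * ?b)"
    using assms by (simp add: prob_space)
  finally show ?thesis by simp
qed

lemma Cov_sum_sum:
  fixes U V :: "'i \<Rightarrow> 'a \<Rightarrow> real"
  assumes "finite I" and iU: "\<And>i. i \<in> I \<Longrightarrow> integrable M (U i)"
    and iV: "\<And>j. j \<in> I \<Longrightarrow> integrable M (V j)"
    and iUV: "\<And>i j. i \<in> I \<Longrightarrow> j \<in> I \<Longrightarrow> integrable M (\<lambda>\<omega>. U i \<omega> * V j \<omega>)"
  shows "Cov M (\<lambda>\<omega>. \<Sum>i\<in>I. a i * U i \<omega>) (\<lambda>\<omega>. \<Sum>j\<in>I. b j * V j \<omega>)
       = (\<Sum>i\<in>I. \<Sum>j\<in>I. a i * b j * Cov M (U i) (V j))"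
proof -
  have product: "(\<lambda>\<omega>. (\<Sum>i\<in>I. a i * U i \<omega>) * (\<Sum>j\<in>I. b j * V j \<omega>))
      = (\<lambda>\<omega>. \<Sum>i\<in>I. \<Sum>j\<in>I. a i * b j * (U i \<omega> * V j \<omega>))"
    by (auto simp: sum_product algebra_simps)
  have "Cov M (\<lambda>\<omega>. \<Sum>i\<in>I. a i * U i \<omega>) (\<lambda>\<omega>. \<Sum>j\<in>I. b j * V j \<omega>)
      = (\<Sum>i\<in>I. \<Sum>j\<in>I. a i * b j * (\<integral>\<omega>. U i \<omega> * V j \<omega> \<partial>M))
        - (\<Sum>i\<in>I. a i * (\<integral>\<omega>. U i \<omega> \<partial>M)) * (\<Sum>j\<in>I. b j * (\<integral>\<omega>. V j \<omega> \<partial>M))"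
    using assms by (subst Cov_eq_integral_mult_diff) (simp_all add: product)
  also have "\<dots> = (\<Sum>i\<in>I. \<Sum>j\<in>I. a i * b j * ((\<integral>\<omega>. U i \<omega> * V j \<omega> \<partial>M) - (\<integral>\<omega>. U i \<omega> \<partial>M) * (\<integral>\<omega>. V j \<omega> \<partial>M)))"
    by (simp add: sum_product sum_subtractf[symmetric] algebra_simps)
  also have "\<dots> = (\<Sum>i\<in>I. \<Sum>j\<in>I. a i * b j * Cov M (U i) (V j))"
    using assms by (intro sum.cong refl) (simp add: Cov_eq_integral_mult_diff)
  finally show ?thesis .
qed

context
  fixes U U' V :: "'a \<Rightarrow> real" and \<delta> K R \<eta> :: real
  assumes measurable [measurable]: "U \<in> borel_measurable M" "U' \<in> borel_measurable M" "V \<in> borel_measurable M"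
    and moments: "abs_moment_2_plus M \<delta> U \<le> ennreal K" "abs_moment_2_plus M \<delta> U' \<le> ennreal K"
      "abs_moment_2_plus M \<delta> V \<le> ennreal K"
    and K: "0 \<le> K" and \<delta>: "0 < \<delta>" and R: "0 < R"
    and L1_close: "(\<integral>\<omega>. \<bar>U \<omega> - U' \<omega>\<bar> \<partial>M) \<le> \<eta>"
begin

private lemmas integrable = integrable_of_moment[OF _ _ K \<delta>]
private lemmas integrable_powr = integrable_abs_powr_of_moment[OF _ _ K \<delta>]
private lemmas integral_powr_le = integral_abs_powr_le_of_moment[OF _ _ K \<delta>]

lemma abs_integral_diff_mult_le:
  "\<bar>\<integral>\<omega>. (U \<omega> - U' \<omega>) * V \<omega> \<partial>M\<bar> \<le> R * \<eta> + R powr (-\<delta>) * (4 * K)"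
proof -
  let ?g = "\<lambda>\<omega>. R * \<bar>U \<omega> - U' \<omega>\<bar>
    + R powr (-\<delta>) * (\<bar>U \<omega>\<bar> powr (2 + \<delta>) + \<bar>U' \<omega>\<bar> powr (2 + \<delta>) + 2 * \<bar>V \<omega>\<bar> powr (2 + \<delta>))"
  note int = integrable[OF measurable(1) moments(1)] integrable[OF measurable(2) moments(2)]
    integrable_powr[OF measurable(1) moments(1)] integrable_powr[OF measurable(2) moments(2)]
    integrable_powr[OF measurable(3) moments(3)]
  have "\<bar>\<integral>\<omega>. (U \<omega> - U' \<omega>) * V \<omega> \<partial>M\<bar> \<le> (\<integral>\<omega>. \<bar>(U \<omega> - U' \<omega>) * V \<omega>\<bar> \<partial>M)"
    by (rule integral_abs_bound)
  also have "\<dots> \<le> (\<integral>\<omega>. ?g \<omega> \<partial>M)"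
    using int R \<delta>
    by (intro integral_mono' abs_mult_le_truncation_bound abs_triangle_ineq4) auto
  also have "\<dots> = R * (\<integral>\<omega>. \<bar>U \<omega> - U' \<omega>\<bar> \<partial>M) + R powr (-\<delta>) * ((\<integral>\<omega>. \<bar>U \<omega>\<bar> powr (2 + \<delta>) \<partial>M)
      + (\<integral>\<omega>. \<bar>U' \<omega>\<bar> powr (2 + \<delta>) \<partial>M) + 2 * (\<integral>\<omega>. \<bar>V \<omega>\<bar> powr (2 + \<delta>) \<partial>M))"
    using int by simp
  also have "\<dots> \<le> R * \<eta> + R powr (-\<delta>) * (K + K + 2 * K)"
    using integral_powr_le[OF measurable(1) moments(1)] integral_powr_le[OF measurable(2) moments(2)]
      integral_powr_le[OF measurable(3) moments(3)] L1_close R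
    by (intro add_mono mult_left_mono) auto
  finally show ?thesis by simp
qed

lemma Cov_perturb_le: "\<bar>Cov M U V - Cov M U' V\<bar> \<le> R * \<eta> + R powr (-\<delta>) * (4 * K) + \<eta> * (1 + K)"
proof -
  note iU = integrable[OF measurable(1) moments(1)] and iU' = integrable[OF measurable(2) moments(2)]
    and iV = integrable[OF measurable(3) moments(3)]
  have iUV: "integrable M (\<lambda>\<omega>. U \<omega> * V \<omega>)" and iU'V: "integrable M (\<lambda>\<omega>. U' \<omega> * V \<omega>)"
    using integrable_mult_of_moments[OF measurable(1,3) moments(1,3) K \<delta>]
      integrable_mult_of_moments[OF measurable(2,3) moments(2,3) K \<delta>] .
  have "Cov M U V - Cov M U' V
      = (\<integral>\<omega>. (U \<omega> - U' \<omega>) * V \<omega> \<partial>M) - (\<integral>\<omega>. U \<omega> - U' \<omega> \<partial>M) * (\<integral>\<omega>. V \<omega> \<partial>M)"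
    using iU iU' iV iUV iU'V
    by (simp add: Cov_eq_integral_mult_diff left_diff_distrib algebra_simps)
  also have "\<bar>\<dots>\<bar> \<le> \<bar>\<integral>\<omega>. (U \<omega> - U' \<omega>) * V \<omega> \<partial>M\<bar> + \<bar>\<integral>\<omega>. U \<omega> - U' \<omega> \<partial>M\<bar> * \<bar>\<integral>\<omega>. V \<omega> \<partial>M\<bar>"
    by (simp add: abs_mult[symmetric] abs_triangle_ineq4)
  also have "\<bar>\<integral>\<omega>. U \<omega> - U' \<omega> \<partial>M\<bar> * \<bar>\<integral>\<omega>. V \<omega> \<partial>M\<bar> \<le> \<eta> * (1 + K)"
  proof (rule mult_mono)
    show "\<bar>\<integral>\<omega>. U \<omega> - U' \<omega> \<partial>M\<bar> \<le> \<eta>"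
      using L1_close integral_abs_bound[of M "\<lambda>\<omega>. U \<omega> - U' \<omega>"] by linarith
    show "\<bar>\<integral>\<omega>. V \<omega> \<partial>M\<bar> \<le> 1 + K"
      using integral_abs_le_of_moment[OF measurable(3) moments(3) K \<delta>] integral_abs_bound[of M V] by linarith
    show "0 \<le> \<eta>" by (rule order_trans[OF Bochner_Integration.integral_nonneg L1_close]) simp
  qed auto
  finally show ?thesis using abs_integral_diff_mult_le by linarith
qed

end

end

section \<open>Linear processes driven by i.i.d. innovations\<close>

locale iid = prob_space M for M :: "'w measure" +
  fixes \<epsilon> :: "int \<Rightarrow> 'w \<Rightarrow> real^'d"
  assumes eps_measurable [measurable]: "\<And>t. \<epsilon> t \<in> borel_measurable M"
    and eps_indep: "indep_vars (\<lambda>_. borel) \<epsilon> UNIV"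
    and eps_ident: "\<And>t. distr M borel (\<epsilon> t) = distr M borel (\<epsilon> 0)"
    and eps_integrable: "integrable M (\<epsilon> 0)"
begin

definition mean_l1 :: real where
  "mean_l1 = (\<integral>\<omega>. l1norm (\<epsilon> 0 \<omega>) \<partial>M)"

lemma mean_l1_nonneg: "0 \<le> mean_l1"
  unfolding mean_l1_def by (simp add: l1norm_nonneg)

lemma integrable_l1norm_eps: "integrable M (\<lambda>\<omega>. l1norm (\<epsilon> k \<omega>))"
proof -
  have "integrable M (\<lambda>\<omega>. l1norm (\<epsilon> 0 \<omega>))"
  proof (rule Bochner_Integration.integrable_bound[where f = "\<lambda>\<omega>. real CARD('d) *\<^sub>R \<epsilon> 0 \<omega>"])
    show "AE \<omega> in M. norm (l1norm (\<epsilon> 0 \<omega>)) \<le> norm (real CARD('d) *\<^sub>R \<epsilon> 0 \<omega>)"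
      by (intro AE_I2) (simp add: l1norm_nonneg l1norm_le_card_norm)
  qed (use eps_integrable in simp_all)
  then show ?thesis
    using integrable_distr_eq[of "\<epsilon> k" M borel l1norm] integrable_distr_eq[of "\<epsilon> 0" M borel l1norm]
      eps_ident[of k] by simp
qed

lemma integral_l1norm_eps: "(\<integral>\<omega>. l1norm (\<epsilon> k \<omega>) \<partial>M) = mean_l1"
  using integral_distr[of "\<epsilon> k" M borel l1norm] integral_distr[of "\<epsilon> 0" M borel l1norm] eps_ident[of k]
  unfolding mean_l1_def by simp

definition lin_proc :: "(int \<Rightarrow> real^'d^'d) \<Rightarrow> int \<Rightarrow> 'w \<Rightarrow> real^'d" where
  "lin_proc c k \<omega> = infsum (\<lambda>j. c j *v \<epsilon> (k - j) \<omega>) UNIV"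

lemma borel_measurable_lin_proc [measurable]: "lin_proc c k \<in> borel_measurable M"
  unfolding lin_proc_def[abs_def] by (rule borel_measurable_infsum_cart) measurable

lemma lin_proc_trunc:
  "(\<Sum>j\<in>{j. \<bar>j\<bar> < int m}. c j *v \<epsilon> (k - j) \<omega>) = lin_proc (\<lambda>j. if \<bar>j\<bar> < int m then c j else 0) k \<omega>"
proof -
  have "finite {j::int. \<bar>j\<bar> < int m}"
    by (rule finite_subset[of _ "{-int m..int m}"]) auto
  moreover have "lin_proc (\<lambda>j. if \<bar>j\<bar> < int m then c j else 0) k \<omega>
      = infsum (\<lambda>j. c j *v \<epsilon> (k - j) \<omega>) {j. \<bar>j\<bar> < int m}"
    unfolding lin_proc_def by (rule infsum_cong_neutral) auto
  ultimately show ?thesis by simp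
qed

text \<open>The monotone limit \<open>dominating_var\<close> of the \<open>\<beta>\<close>-weighted \<open>l1norm\<close>s of the innovations has
  expectation at most \<open>mean_l1 * infsum \<beta> UNIV\<close>; being finite a.s., it makes the defining series
  of the linear process summable a.s.\ and dominates its sum.\<close>

context
  fixes c :: "int \<Rightarrow> real^'d^'d" and \<beta> :: "int \<Rightarrow> real" and k :: int
  assumes c_le: "\<And>j. mnorm1 (c j) \<le> \<beta> j" and \<beta>_summable: "\<beta> summable_on UNIV"
begin

private lemma \<beta>_nonneg: "0 \<le> \<beta> j"
  using c_le[of j] mnorm1_nonneg[of "c j"] by linarith

private definition dominating_partial :: "nat \<Rightarrow> 'w \<Rightarrow> real" where
  "dominating_partial n \<omega> = (\<Sum>j\<in>{-int n..int n}. \<beta> j * l1norm (\<epsilon> (k - j) \<omega>))"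

private definition dominating_var :: "'w \<Rightarrow> ennreal" where
  "dominating_var \<omega> = (SUP n. ennreal (dominating_partial n \<omega>))"

private lemma borel_measurable_dominating_partial [measurable]: "dominating_partial n \<in> borel_measurable M"
  unfolding dominating_partial_def by measurable

private lemma borel_measurable_dominating_var [measurable]: "dominating_var \<in> borel_measurable M"
  unfolding dominating_var_def by measurable

private lemma nn_integral_dominating_var_le:
  "(\<integral>\<^sup>+\<omega>. dominating_var \<omega> \<partial>M) \<le> ennreal (mean_l1 * infsum \<beta> UNIV)"
proof -
  have "(\<integral>\<^sup>+\<omega>. ennreal (dominating_partial n \<omega>) \<partial>M) \<le> ennreal (mean_l1 * infsum \<beta> UNIV)" for n
  proof -
    have "(\<integral>\<^sup>+\<omega>. ennreal (dominating_partial n \<omega>) \<partial>M) = ennreal (\<integral>\<omega>. dominating_partial n \<omega> \<partial>M)"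
      unfolding dominating_partial_def
      by (intro nn_integral_eq_integral)
         (auto intro!: sum_nonneg mult_nonneg_nonneg \<beta>_nonneg l1norm_nonneg integrable_l1norm_eps)
    also have "(\<integral>\<omega>. dominating_partial n \<omega> \<partial>M) = mean_l1 * (\<Sum>j\<in>{-int n..int n}. \<beta> j)"
      unfolding dominating_partial_def
      by (subst Bochner_Integration.integral_sum)
         (auto intro!: integrable_l1norm_eps simp: integral_l1norm_eps sum_distrib_left mult.commute)
    also have "\<dots> \<le> mean_l1 * infsum \<beta> UNIV"
      by (intro mult_left_mono finite_sum_le_infsum \<beta>_summable \<beta>_nonneg mean_l1_nonneg) auto
    finally show ?thesis by (simp add: ennreal_leI)
  qed
  moreover have "incseq (\<lambda>n \<omega>. ennreal (dominating_partial n \<omega>))"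
    unfolding dominating_partial_def
    by (auto simp: incseq_def le_fun_def intro!: ennreal_leI sum_mono2 mult_nonneg_nonneg \<beta>_nonneg l1norm_nonneg)
  ultimately show ?thesis
    unfolding dominating_var_def
    by (subst nn_integral_monotone_convergence_SUP) (auto intro!: SUP_least)
qed

private lemma partial_l1norm_le_dominating_partial:
  "(\<Sum>j\<in>{-int n..int n}. l1norm (c j *v \<epsilon> (k - j) \<omega>)) \<le> dominating_partial n \<omega>"
  unfolding dominating_partial_def
  by (intro sum_mono order_trans[OF l1norm_mult_vec_le] mult_right_mono c_le l1norm_nonneg)

private lemma partial_le_dominating_var: "ennreal (dominating_partial n \<omega>) \<le> dominating_var \<omega>"
  unfolding dominating_var_def by (rule SUP_upper) auto

lemma lin_proc_summable_AE: "AE \<omega> in M. (\<lambda>j. c j *v \<epsilon> (k - j) \<omega>) summable_on UNIV"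
proof -
  have "AE \<omega> in M. dominating_var \<omega> \<noteq> \<infinity>"
    using nn_integral_dominating_var_le by (intro nn_integral_noteq_infinite) (auto simp: top_unique)
  then show ?thesis
  proof (rule eventually_mono)
    fix \<omega> assume "dominating_var \<omega> \<noteq> \<infinity>"
    then obtain r where r: "dominating_var \<omega> = ennreal r" "0 \<le> r" using ennreal_cases by auto
    have "(\<Sum>j\<in>{-int n..int n}. norm (c j *v \<epsilon> (k - j) \<omega>)) \<le> r" for n :: nat
    proof -
      have "(\<Sum>j\<in>{-int n..int n}. norm (c j *v \<epsilon> (k - j) \<omega>)) \<le> dominating_partial n \<omega>"
        by (rule order_trans[OF sum_mono[OF norm_le_l1norm] partial_l1norm_le_dominating_partial])
      also have "\<dots> \<le> r" using partial_le_dominating_var[of n \<omega>] r by (simp add: ennreal_le_iff)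
      finally show ?thesis .
    qed
    then show "(\<lambda>j. c j *v \<epsilon> (k - j) \<omega>) summable_on UNIV"
      unfolding summable_on_int_iff_bounded_symmetric_sums by blast
  qed
qed

private lemma l1norm_lin_proc_le_dominating_var: "ennreal (l1norm (lin_proc c k \<omega>)) \<le> dominating_var \<omega>"
proof (cases "(\<lambda>j. c j *v \<epsilon> (k - j) \<omega>) summable_on UNIV")
  case True
  have "(\<lambda>n. \<Sum>j\<in>{-int n..int n}. c j *v \<epsilon> (k - j) \<omega>) \<longlonglongrightarrow> lin_proc c k \<omega>"
    unfolding lin_proc_def using has_sum_imp_symmetric_sums_tendsto[OF has_sum_infsum[OF True]] .
  then have "(\<lambda>n. ennreal (l1norm (\<Sum>j\<in>{-int n..int n}. c j *v \<epsilon> (k - j) \<omega>)))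
      \<longlonglongrightarrow> ennreal (l1norm (lin_proc c k \<omega>))"
    using continuous_on_l1norm continuous_on_eq_continuous_at
    by (intro tendsto_ennrealI isCont_tendsto_compose[where g = l1norm]) auto
  then show ?thesis
  proof (rule LIMSEQ_le_const2, intro exI allI impI)
    fix n
    have "l1norm (\<Sum>j\<in>{-int n..int n}. c j *v \<epsilon> (k - j) \<omega>) \<le> dominating_partial n \<omega>"
      by (rule order_trans[OF l1norm_sum_le partial_l1norm_le_dominating_partial]) auto
    then show "ennreal (l1norm (\<Sum>j\<in>{-int n..int n}. c j *v \<epsilon> (k - j) \<omega>)) \<le> dominating_var \<omega>"
      by (rule order_trans[OF ennreal_leI partial_le_dominating_var])
  qed
qed (simp add: lin_proc_def infsum_not_exists)

lemma nn_integral_l1norm_lin_proc_le: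
  "(\<integral>\<^sup>+\<omega>. ennreal (l1norm (lin_proc c k \<omega>)) \<partial>M) \<le> ennreal (mean_l1 * infsum \<beta> UNIV)"
  by (rule order_trans[OF nn_integral_mono nn_integral_dominating_var_le])
     (rule l1norm_lin_proc_le_dominating_var)

end

lemma lin_proc_diff_AE:
  assumes "\<And>j. mnorm1 (c j) \<le> \<beta> j" "\<beta> summable_on UNIV"
    and "\<And>j. mnorm1 (c' j) \<le> \<beta>' j" "\<beta>' summable_on UNIV"
  shows "AE \<omega> in M. lin_proc c k \<omega> - lin_proc c' k \<omega> = lin_proc (\<lambda>j. c j - c' j) k \<omega>"
  using lin_proc_summable_AE[OF assms(1,2), of k] lin_proc_summable_AE[OF assms(3,4), of k]
proof eventually_elim
  case (elim \<omega>)
  have "lin_proc (\<lambda>j. c j - c' j) k \<omega> = infsum (\<lambda>j. c j *v \<epsilon> (k - j) \<omega> + - (c' j *v \<epsilon> (k - j) \<omega>)) UNIV"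
    unfolding lin_proc_def by (simp add: matrix_vector_mult_diff_rdistrib)
  also have "\<dots> = lin_proc c k \<omega> - lin_proc c' k \<omega>"
    unfolding lin_proc_def using elim by (subst infsum_add) (simp_all add: summable_on_uminus infsum_uminus)
  finally show ?case by simp
qed

lemma nn_integral_l1norm_lin_proc_diff_le:
  assumes "\<And>j. mnorm1 (c j) \<le> \<beta> j" "\<beta> summable_on UNIV"
    and "\<And>j. mnorm1 (c' j) \<le> \<beta>' j" "\<beta>' summable_on UNIV"
    and "\<And>j. mnorm1 (c j - c' j) \<le> \<gamma> j" "\<gamma> summable_on UNIV"
  shows "(\<integral>\<^sup>+\<omega>. ennreal (l1norm (lin_proc c k \<omega> - lin_proc c' k \<omega>)) \<partial>M) \<le> ennreal (mean_l1 * infsum \<gamma> UNIV)"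
proof -
  have "(\<integral>\<^sup>+\<omega>. ennreal (l1norm (lin_proc c k \<omega> - lin_proc c' k \<omega>)) \<partial>M)
      = (\<integral>\<^sup>+\<omega>. ennreal (l1norm (lin_proc (\<lambda>j. c j - c' j) k \<omega>)) \<partial>M)"
    using lin_proc_diff_AE[OF assms(1-4), of k] by (intro nn_integral_cong_AE) auto
  also have "\<dots> \<le> ennreal (mean_l1 * infsum \<gamma> UNIV)"
    by (rule nn_integral_l1norm_lin_proc_le[OF assms(5,6)])
  finally show ?thesis .
qed

lemma Cov_indep_restrict_eq_0:
  fixes g1 g2 :: "(int \<Rightarrow> real^'d) \<Rightarrow> real"
  assumes "I1 \<inter> I2 = {}"
    and [measurable]: "g1 \<in> borel_measurable (PiM I1 (\<lambda>_. borel))" "g2 \<in> borel_measurable (PiM I2 (\<lambda>_. borel))"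
    and integrable: "integrable M (\<lambda>\<omega>. g1 (restrict (\<lambda>i. \<epsilon> i \<omega>) I1))"
      "integrable M (\<lambda>\<omega>. g2 (restrict (\<lambda>i. \<epsilon> i \<omega>) I2))"
  shows "Cov M (\<lambda>\<omega>. g1 (restrict (\<lambda>i. \<epsilon> i \<omega>) I1)) (\<lambda>\<omega>. g2 (restrict (\<lambda>i. \<epsilon> i \<omega>) I2)) = 0"
proof -
  have "indep_var (PiM I1 (\<lambda>_. borel)) (\<lambda>\<omega>. restrict (\<lambda>i. \<epsilon> i \<omega>) I1)
      (PiM I2 (\<lambda>_. borel)) (\<lambda>\<omega>. restrict (\<lambda>i. \<epsilon> i \<omega>) I2)"
    by (rule indep_var_restrict[OF eps_indep assms(1)]) auto
  from indep_var_compose[OF this assms(2,3)]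
  have indep: "indep_var borel (\<lambda>\<omega>. g1 (restrict (\<lambda>i. \<epsilon> i \<omega>) I1)) borel (\<lambda>\<omega>. g2 (restrict (\<lambda>i. \<epsilon> i \<omega>) I2))"
    by (simp add: o_def)
  show ?thesis
    using Cov_eq_integral_mult_diff[OF integrable indep_var_integrable[OF indep integrable]]
      indep_var_lebesgue_integral[OF indep integrable]
    by simp
qed

abbreviation seq_space :: "(int \<Rightarrow> real^'d) measure" where
  "seq_space \<equiv> PiM UNIV (\<lambda>_. borel)"

definition shifted_eps :: "int \<Rightarrow> 'w \<Rightarrow> int \<Rightarrow> real^'d" where
  "shifted_eps t \<omega> = (\<lambda>k. \<epsilon> (k + t) \<omega>)"

lemma measurable_shifted_eps [measurable]: "shifted_eps t \<in> measurable M seq_space"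
proof -
  have "shifted_eps t = (\<lambda>\<omega>. \<lambda>k\<in>UNIV. \<epsilon> (k + t) \<omega>)" by (auto simp: shifted_eps_def fun_eq_iff)
  then show ?thesis by (simp add: measurable_restrict)
qed

lemma distr_shifted_eps: "distr M seq_space (shifted_eps t) = PiM UNIV (\<lambda>_. distr M borel (\<epsilon> 0))"
proof -
  let ?D = "distr M borel (\<epsilon> 0)" and ?shift = "\<lambda>x. \<lambda>n\<in>UNIV. x (n + t)"
  have "distr M seq_space (\<lambda>\<omega>. \<lambda>i\<in>UNIV. \<epsilon> i \<omega>) = PiM UNIV (\<lambda>i. distr M borel (\<epsilon> i))"
    using eps_indep by (subst indep_vars_iff_distr_eq_PiM'[symmetric]) auto
  also have "\<dots> = PiM UNIV (\<lambda>_. ?D)" by (rule PiM_cong) (rule refl, rule eps_ident)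
  finally have eps_distr: "distr M seq_space (shifted_eps 0) = PiM UNIV (\<lambda>_. ?D)"
    by (simp add: shifted_eps_def[abs_def] restrict_UNIV)
  have "distr M seq_space (shifted_eps t) = distr M seq_space (?shift \<circ> shifted_eps 0)"
    by (rule distr_cong) (auto simp: shifted_eps_def fun_eq_iff)
  also have "\<dots> = distr (distr M seq_space (shifted_eps 0)) seq_space ?shift"
    by (rule distr_distr[symmetric]) measurable
  also have "\<dots> = distr (PiM UNIV (\<lambda>_. ?D)) (PiM UNIV (\<lambda>_. ?D)) ?shift"
    unfolding eps_distr by (rule distr_cong[OF refl sets_PiM_cong]) auto
  also have "\<dots> = PiM UNIV (\<lambda>_. ?D)"
    using distr_PiM_reindex[of UNIV "\<lambda>_. ?D" "\<lambda>n. n + t" UNIV]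
    by (simp add: prob_space_distr inj_on_def)
  finally show ?thesis .
qed

lemma integral_shifted_eps:
  fixes G :: "(int \<Rightarrow> real^'d) \<Rightarrow> real"
  assumes "G \<in> borel_measurable seq_space"
  shows "(\<integral>\<omega>. G (shifted_eps t \<omega>) \<partial>M) = (\<integral>\<omega>. G (shifted_eps 0 \<omega>) \<partial>M)"
proof -
  have "(\<integral>\<omega>. G (shifted_eps s \<omega>) \<partial>M) = integral\<^sup>L (PiM UNIV (\<lambda>_. distr M borel (\<epsilon> 0))) G" for s
    using integral_distr[OF measurable_shifted_eps assms] by (simp add: distr_shifted_eps)
  then show ?thesis by simp
qed

lemma nn_integral_shifted_eps:
  assumes "G \<in> borel_measurable seq_space"
  shows "(\<integral>\<^sup>+\<omega>. G (shifted_eps t \<omega>) \<partial>M) = (\<integral>\<^sup>+\<omega>. G (shifted_eps 0 \<omega>) \<partial>M)"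
proof -
  have "(\<integral>\<^sup>+\<omega>. G (shifted_eps s \<omega>) \<partial>M) = integral\<^sup>N (PiM UNIV (\<lambda>_. distr M borel (\<epsilon> 0))) G" for s
    using nn_integral_distr[OF measurable_shifted_eps, of G] assms by (simp add: distr_shifted_eps)
  then show ?thesis by simp
qed

lemma Cov_shifted_eps:
  fixes F1 F2 :: "(int \<Rightarrow> real^'d) \<Rightarrow> real"
  assumes [measurable]: "F1 \<in> borel_measurable seq_space" "F2 \<in> borel_measurable seq_space"
  shows "Cov M (\<lambda>\<omega>. F1 (shifted_eps t \<omega>)) (\<lambda>\<omega>. F2 (shifted_eps t \<omega>))
       = Cov M (\<lambda>\<omega>. F1 (shifted_eps 0 \<omega>)) (\<lambda>\<omega>. F2 (shifted_eps 0 \<omega>))"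
  unfolding Cov_def integral_shifted_eps[OF assms(1), of t] integral_shifted_eps[OF assms(2), of t]
  by (rule integral_shifted_eps) measurable

lemma abs_moment_2_plus_shifted_eps:
  assumes [measurable]: "F \<in> borel_measurable seq_space"
  shows "abs_moment_2_plus M \<delta> (\<lambda>\<omega>. F (shifted_eps t \<omega>)) = abs_moment_2_plus M \<delta> (\<lambda>\<omega>. F (shifted_eps 0 \<omega>))"
  unfolding abs_moment_2_plus_def by (rule nn_integral_shifted_eps) measurable

lemma borel_measurable_lin_filter_seq [measurable]:
  fixes c :: "int \<Rightarrow> real^'d^'d"
  shows "(\<lambda>x::int \<Rightarrow> real^'d. infsum (\<lambda>j. c j *v x (h - j)) UNIV) \<in> borel_measurable seq_space"
  by (intro borel_measurable_infsum_cart borel_measurable_mult_vec) simp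

end

lemma C1_on_unit_with_lipschitz:
  fixes g :: "real \<Rightarrow> 'a::real_normed_vector"
  assumes "C1_on_unit_with g D" and "\<And>u. u \<in> {0..1} \<Longrightarrow> norm (D u) \<le> L"
    and "u \<in> {0..1}" "v \<in> {0..1}"
  shows "norm (g u - g v) \<le> L * \<bar>u - v\<bar>"
proof -
  have "norm (g u - g v) \<le> L * norm (u - v)"
  proof (rule differentiable_bound[where S = "{0..1}" and f' = "\<lambda>x h. h *\<^sub>R D x"])
    show "(g has_derivative (\<lambda>h. h *\<^sub>R D x)) (at x within {0..1})" if "x \<in> {0..1}" for x
      using assms(1) that unfolding C1_on_unit_with_def has_vector_derivative_def by blast
    show "onorm (\<lambda>h. h *\<^sub>R D x) \<le> L" if "x \<in> {0..1}" for x
    proof (rule onorm_le)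
      show "norm (h *\<^sub>R D x) \<le> L * norm h" for h
        using mult_left_mono[OF assms(2)[OF that], of "\<bar>h\<bar>"] by (simp add: mult.commute)
    qed
  qed (use assms(3,4) in auto)
  then show ?thesis by simp
qed

lemma C1_on_unit_with_l1norm_lipschitz:
  fixes \<mu> :: "real \<Rightarrow> real^'d"
  assumes "C1_on_unit_with \<mu> D"
  obtains L where "0 \<le> L" "\<And>u v. u \<in> {0..1} \<Longrightarrow> v \<in> {0..1} \<Longrightarrow> l1norm (\<mu> u - \<mu> v) \<le> L * \<bar>u - v\<bar>"
proof -
  have "continuous_on {0..1} D" using assms unfolding C1_on_unit_with_def by blast
  then obtain L where L: "0 \<le> L" "\<And>u. u \<in> {0..1} \<Longrightarrow> norm (D u) \<le> L"
    using continuous_on_compact_bound[OF compact_Icc] by (metis norm_ge_zero order_trans)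
  show ?thesis
  proof (rule that[of "real CARD('d) * L"])
    fix u v :: real assume uv: "u \<in> {0..1}" "v \<in> {0..1}"
    have "l1norm (\<mu> u - \<mu> v) \<le> real CARD('d) * norm (\<mu> u - \<mu> v)" by (rule l1norm_le_card_norm)
    also have "\<dots> \<le> real CARD('d) * (L * \<bar>u - v\<bar>)"
      by (intro mult_left_mono C1_on_unit_with_lipschitz[OF assms L(2) uv]) auto
    finally show "l1norm (\<mu> u - \<mu> v) \<le> real CARD('d) * L * \<bar>u - v\<bar>" by simp
  qed (use L in simp)
qed

lemma mnorm1_lipschitz_of_C1_entries:
  fixes A :: "real \<Rightarrow> int \<Rightarrow> real^'d^'d"
  assumes "\<And>j p q. \<exists>D. C1_on_unit_with (\<lambda>u. A u j $ p $ q) D \<and> (\<forall>u\<in>{0..1}. \<bar>D u\<bar> \<le> b j)"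
    and "u \<in> {0..1}" "v \<in> {0..1}"
  shows "mnorm1 (A u j - A v j) \<le> real CARD('d) * (b j * \<bar>u - v\<bar>)"
proof (rule mnorm1_le_card_mult)
  fix p q
  obtain D where D: "C1_on_unit_with (\<lambda>u. A u j $ p $ q) D" "\<forall>u\<in>{0..1}. \<bar>D u\<bar> \<le> b j"
    using assms(1) by blast
  have "norm (A u j $ p $ q - A v j $ p $ q) \<le> b j * \<bar>u - v\<bar>"
    by (rule C1_on_unit_with_lipschitz[OF D(1) _ assms(2,3)]) (use D(2) in auto)
  then show "\<bar>(A u j - A v j) $ p $ q\<bar> \<le> b j * \<bar>u - v\<bar>" by simp
qed

section \<open>The locally stationary setting\<close>

lemma sum_square_weights_le:
  fixes w :: "int \<Rightarrow> real" and d :: nat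
  assumes w_nonneg: "\<And>t. 0 \<le> w t" and w_support: "\<And>t. t < 1 \<or> t > int T \<Longrightarrow> w t = 0"
    and d: "d = card {t. 0 < w t}" and w_le: "\<And>t. w t \<le> Cw / sqrt (real d)"
  shows "(\<Sum>t\<in>{1..int T}. (w t)\<^sup>2) \<le> Cw\<^sup>2"
proof -
  let ?P = "{t. 0 < w t}"
  have P_sub: "?P \<subseteq> {1..int T}" using w_support by (force simp: not_less)
  have "(\<Sum>t\<in>{1..int T}. (w t)\<^sup>2) = (\<Sum>t\<in>?P. (w t)\<^sup>2)"
    using w_nonneg by (intro sum.mono_neutral_right[OF _ P_sub]) (auto simp: less_le)
  also have "\<dots> \<le> (\<Sum>t\<in>?P. (Cw / sqrt (real d))\<^sup>2)"
    by (intro sum_mono power_mono w_le) (use w_nonneg in auto)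
  also have "\<dots> = real d * (Cw / sqrt (real d))\<^sup>2" unfolding d by simp
  also have "\<dots> \<le> Cw\<^sup>2"
    by (cases "d = 0") (simp_all add: power_divide)
  finally show ?thesis .
qed

lemma sum_lag_weights_le:
  fixes w :: "int \<Rightarrow> real" and d :: nat
  assumes w_nonneg: "\<And>t. 0 \<le> w t" and w_support: "\<And>t. t < 1 \<or> t > int T \<Longrightarrow> w t = 0"
    and d: "d = card {t. 0 < w t}" and w_le: "\<And>t. w t \<le> Cw / sqrt (real d)"
  shows "(\<Sum>t\<in>{1..int T}. w t * w (t + h)) \<le> Cw\<^sup>2"
proof -
  have shifted_squares: "(\<Sum>t\<in>{1..int T}. (w (t + h))\<^sup>2) \<le> (\<Sum>t\<in>{1..int T}. (w t)\<^sup>2)"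
  proof -
    have "(\<Sum>t\<in>{1..int T}. (w (t + h))\<^sup>2) = (\<Sum>s\<in>(\<lambda>t. t + h) ` {1..int T}. (w s)\<^sup>2)"
      by (subst sum.reindex) (auto simp: inj_on_def)
    also have "\<dots> = (\<Sum>s\<in>(\<lambda>t. t + h) ` {1..int T} \<inter> {1..int T}. (w s)\<^sup>2)"
      by (rule sum.mono_neutral_right) (use w_support in \<open>auto simp: not_le\<close>)
    also have "\<dots> \<le> (\<Sum>s\<in>{1..int T}. (w s)\<^sup>2)"
      by (rule sum_mono2) auto
    finally show ?thesis .
  qed
  have "(\<Sum>t\<in>{1..int T}. w t * w (t + h)) \<le> (\<Sum>t\<in>{1..int T}. ((w t)\<^sup>2 + (w (t + h))\<^sup>2) / 2)"
  proof (rule sum_mono)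
    show "w t * w (t + h) \<le> ((w t)\<^sup>2 + (w (t + h))\<^sup>2) / 2" for t
      using sum_squares_bound[of "w t" "w (t + h)"] by simp
  qed
  also have "\<dots> = ((\<Sum>t\<in>{1..int T}. (w t)\<^sup>2) + (\<Sum>t\<in>{1..int T}. (w (t + h))\<^sup>2)) / 2"
    by (simp add: sum.distrib sum_divide_distrib[symmetric])
  also have "\<dots> \<le> Cw\<^sup>2"
    using sum_square_weights_le[where T = T, OF w_nonneg w_support d w_le] shifted_squares by simp
  finally show ?thesis .
qed

lemma truncation_bound_le_geometric:
  fixes \<theta> \<delta> c K :: real and m n :: nat
  assumes \<theta>: "0 < \<theta>" "\<theta> < 1" and \<delta>: "0 < \<delta>" "\<delta> \<le> 1" and "0 \<le> c" "0 \<le> K"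
    and n: "n \<le> 2 * m + 1"
  shows "2 * (\<theta> powr (-(m/2)) * (c * \<theta> ^ m) + (\<theta> powr (-(m/2))) powr (-\<delta>) * (4 * K) + c * \<theta> ^ m * (1 + K))
         \<le> 2 * (c + 4 * K + c * (1 + K)) * \<theta> powr (-\<delta>/4) * (\<theta> powr (\<delta>/4)) ^ n"
proof -
  \<comment> \<open>Since \<open>\<delta> \<le> 1\<close>, each of the three terms is at most a multiple of \<open>E = \<theta> powr (\<delta> m / 2)\<close>.\<close>
  define E where "E = \<theta> powr (\<delta> * m / 2)"
  have \<theta>_pow: "\<theta> ^ m = \<theta> powr m" using \<theta> by (simp add: powr_realpow)
  have \<delta>m: "\<delta> * real m \<le> real m" using \<delta> mult_right_mono[of \<delta> 1 "real m"] by simp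
  have first: "\<theta> powr (-(m/2)) * \<theta> ^ m \<le> E"
  proof -
    have "\<theta> powr (-(m/2)) * \<theta> ^ m = \<theta> powr (m/2)"
      unfolding \<theta>_pow by (simp add: powr_add[symmetric])
    also have "\<dots> \<le> E" unfolding E_def using \<theta> \<delta> \<delta>m by (intro powr_mono') auto
    finally show ?thesis .
  qed
  have second: "(\<theta> powr (-(m/2))) powr (-\<delta>) = E"
    unfolding E_def powr_powr by (simp add: algebra_simps)
  have third: "\<theta> ^ m \<le> E" unfolding E_def \<theta>_pow using \<theta> \<delta> \<delta>m by (intro powr_mono') auto
  have E_le: "E \<le> \<theta> powr (-\<delta>/4) * (\<theta> powr (\<delta>/4)) ^ n"
  proof -
    have "E \<le> \<theta> powr (\<delta> * (real n - 1) / 4)"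
      unfolding E_def using \<theta> \<delta> n by (intro powr_mono') (auto intro!: mult_left_mono)
    also have "\<dots> = \<theta> powr (-\<delta>/4) * \<theta> powr (\<delta>/4 * n)"
      by (simp add: powr_add[symmetric] algebra_simps diff_divide_distrib)
    also have "\<theta> powr (\<delta>/4 * n) = (\<theta> powr (\<delta>/4)) ^ n"
      using \<theta> by (simp add: powr_realpow[symmetric] powr_powr)
    finally show ?thesis .
  qed
  have "\<theta> powr (-(m/2)) * (c * \<theta> ^ m) \<le> c * E"
    using mult_left_mono[OF first \<open>0 \<le> c\<close>] by (simp add: mult.left_commute)
  moreover have "c * \<theta> ^ m * (1 + K) \<le> c * E * (1 + K)"
    using third assms by (intro mult_right_mono mult_left_mono) auto
  ultimately have "2 * (\<theta> powr (-(m/2)) * (c * \<theta> ^ m) + (\<theta> powr (-(m/2))) powr (-\<delta>) * (4 * K) + c * \<theta> ^ m * (1 + K))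
     \<le> 2 * (c * E + E * (4 * K) + c * E * (1 + K))"
    unfolding second by simp
  also have "\<dots> = 2 * (c + 4 * K + c * (1 + K)) * E" by (simp add: algebra_simps)
  also have "\<dots> \<le> 2 * (c + 4 * K + c * (1 + K)) * (\<theta> powr (-\<delta>/4) * (\<theta> powr (\<delta>/4)) ^ n)"
    using E_le assms by (intro mult_left_mono) auto
  finally show ?thesis by (simp add: mult.assoc)
qed

locale ls_setting = iid M \<epsilon> for M :: "'w measure" and \<epsilon> :: "int \<Rightarrow> 'w \<Rightarrow> real^'d" +
  fixes \<mu> :: "real \<Rightarrow> real^'d" and Lmu :: real
    and At :: "nat \<Rightarrow> int \<Rightarrow> int \<Rightarrow> real^'d^'d" and A :: "real \<Rightarrow> int \<Rightarrow> real^'d^'d"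
    and \<theta> B :: real and w :: "nat \<Rightarrow> int \<Rightarrow> real" and dT :: "nat \<Rightarrow> nat" and Cw :: real
    and S :: "'s set" and f :: "'s \<Rightarrow> real^'d \<Rightarrow> real" and s1 s2 :: 's and CLip \<delta> K :: real
  assumes mu_lipschitz: "\<And>u v. u \<in> {0..1} \<Longrightarrow> v \<in> {0..1} \<Longrightarrow> l1norm (\<mu> u - \<mu> v) \<le> Lmu * \<bar>u - v\<bar>"
    and Lmu_nonneg: "0 \<le> Lmu"
    and theta: "0 < \<theta>" "\<theta> < 1"
    and At_bound: "\<And>T t j. 1 \<le> t \<Longrightarrow> t \<le> int T \<Longrightarrow> mnorm1 (At T t j) \<le> B * \<theta> ^ nat \<bar>j\<bar>"
    and A_C1: "\<And>j p q. \<exists>D. C1_on_unit_with (\<lambda>u. A u j $ p $ q) D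
      \<and> (\<forall>u\<in>{0..1}. \<bar>D u\<bar> \<le> B * \<theta> ^ nat \<bar>j\<bar>)"
    and A_bound: "\<And>j p q u. u \<in> {0..1} \<Longrightarrow> \<bar>A u j $ p $ q\<bar> \<le> B * \<theta> ^ nat \<bar>j\<bar>"
    and At_A: "\<And>T t j. 1 \<le> t \<Longrightarrow> t \<le> int T \<Longrightarrow>
      real T * mnorm1 (At T t j - A (real_of_int t / real T) j) \<le> B * \<theta> ^ nat \<bar>j\<bar>"
    and w_nonneg: "\<And>T t. 0 \<le> w T t"
    and w_support: "\<And>T t. t < 1 \<or> t > int T \<Longrightarrow> w T t = 0"
    and dT_def: "\<And>T. dT T = card {t. 0 < w T t}"
    and w_bound: "\<And>T t. w T t \<le> Cw / sqrt (real (dT T))"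
    and s1: "s1 \<in> S" and s2: "s2 \<in> S"
    and f_lipschitz: "\<And>s x y. s \<in> S \<Longrightarrow> \<bar>f s x - f s y\<bar> \<le> CLip * l1norm (x - y)"
    and delta: "0 < \<delta>" "\<delta> < 1/2"
    and K_nonneg: "0 \<le> K"
    and moment_bounds: "\<forall>s\<in>S.
      (\<forall>T t. 1 \<le> t \<longrightarrow> t \<le> int T \<longrightarrow>
          abs_moment_2_plus M \<delta> (\<lambda>\<omega>. f s (LSX \<mu> At \<epsilon> T t \<omega>)) \<le> ennreal K
        \<and> (\<forall>m. abs_moment_2_plus M \<delta> (\<lambda>\<omega>. f s (LSX_trunc \<mu> At \<epsilon> m T t \<omega>)) \<le> ennreal K))
      \<and> (\<forall>u\<in>{0..1}. abs_moment_2_plus M \<delta> (\<lambda>\<omega>. f s (SX \<mu> A \<epsilon> u 0 \<omega>)) \<le> ennreal K)"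
begin

lemma moment_LSX:
  "s \<in> S \<Longrightarrow> 1 \<le> t \<Longrightarrow> t \<le> int T \<Longrightarrow> abs_moment_2_plus M \<delta> (\<lambda>\<omega>. f s (LSX \<mu> At \<epsilon> T t \<omega>)) \<le> ennreal K"
  using moment_bounds by blast

lemma moment_LSX_trunc:
  "s \<in> S \<Longrightarrow> 1 \<le> t \<Longrightarrow> t \<le> int T \<Longrightarrow>
    abs_moment_2_plus M \<delta> (\<lambda>\<omega>. f s (LSX_trunc \<mu> At \<epsilon> m T t \<omega>)) \<le> ennreal K"
  using moment_bounds by blast

lemma moment_SX:
  "s \<in> S \<Longrightarrow> u \<in> {0..1} \<Longrightarrow> abs_moment_2_plus M \<delta> (\<lambda>\<omega>. f s (SX \<mu> A \<epsilon> u 0 \<omega>)) \<le> ennreal K"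
  using moment_bounds by blast

lemma delta_le_1: "\<delta> \<le> 1"
  using delta by simp

lemma A_lipschitz:
  "u \<in> {0..1} \<Longrightarrow> v \<in> {0..1} \<Longrightarrow> mnorm1 (A u j - A v j) \<le> real CARD('d) * (B * \<theta> ^ nat \<bar>j\<bar> * \<bar>u - v\<bar>)"
  by (rule mnorm1_lipschitz_of_C1_entries[OF A_C1])

lemma lag_weights_le: "(\<Sum>t\<in>{1..int T}. w T t * w T (t + h)) \<le> Cw\<^sup>2"
  by (rule sum_lag_weights_le[OF w_nonneg w_support dT_def w_bound])

lemma B_nonneg: "0 \<le> B"
  using A_bound[of 0 0 undefined undefined] abs_ge_zero order_trans by fastforce

lemma CLip_nonneg: "0 \<le> CLip"
proof -
  have "l1norm (0 - vec 1 :: real^'d) = real CARD('d)" by (simp add: l1norm_def)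
  then have "0 \<le> CLip * real CARD('d)"
    using f_lipschitz[OF s1, of 0 "vec 1"] abs_ge_zero order_trans by metis
  then show ?thesis by (simp add: zero_le_mult_iff)
qed

lemma borel_measurable_f_comp:
  assumes "s \<in> S" "X \<in> borel_measurable N"
  shows "(\<lambda>\<omega>. f s (X \<omega>)) \<in> borel_measurable N"
proof -
  have "lipschitz_on (CLip * real CARD('d)) UNIV (f s)"
  proof (rule lipschitz_onI)
    show "dist (f s x) (f s y) \<le> CLip * real CARD('d) * dist x y" for x y
      using f_lipschitz[OF assms(1), of x y] mult_left_mono[OF l1norm_le_card_norm[of "x - y"] CLip_nonneg]
      by (simp add: dist_real_def dist_norm mult.assoc)
  qed (simp add: CLip_nonneg)
  then have "continuous_on UNIV (f s)" by (rule lipschitz_on_continuous_on)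
  then show ?thesis using measurable_compose[OF assms(2) borel_measurable_continuous_onI] by blast
qed

lemma LSX_eq_lin_proc: "LSX \<mu> At \<epsilon> T t \<omega> = \<mu> (real_of_int t / real T) + lin_proc (At T t) t \<omega>"
  by (simp add: LSX_def lin_proc_def)

lemma SX_eq_lin_proc: "SX \<mu> A \<epsilon> u t \<omega> = \<mu> u + lin_proc (A u) t \<omega>"
  by (simp add: SX_def lin_proc_def)

lemma LSX_trunc_eq_lin_proc:
  "LSX_trunc \<mu> At \<epsilon> m T t \<omega> = \<mu> (real_of_int t / real T) + lin_proc (\<lambda>j. if \<bar>j\<bar> < int m then At T t j else 0) t \<omega>"
  by (simp add: LSX_trunc_def lin_proc_trunc)

lemma borel_measurable_LSX [measurable]: "LSX \<mu> At \<epsilon> T t \<in> borel_measurable M"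
  unfolding LSX_eq_lin_proc[abs_def] by measurable

lemma borel_measurable_SX [measurable]: "SX \<mu> A \<epsilon> u t \<in> borel_measurable M"
  unfolding SX_eq_lin_proc[abs_def] by measurable

lemma borel_measurable_LSX_trunc [measurable]: "LSX_trunc \<mu> At \<epsilon> m T t \<in> borel_measurable M"
  unfolding LSX_trunc_eq_lin_proc[abs_def] by measurable

lemma borel_measurable_f_processes:
  assumes "s \<in> S"
  shows "(\<lambda>\<omega>. f s (LSX \<mu> At \<epsilon> T t \<omega>)) \<in> borel_measurable M"
    and "(\<lambda>\<omega>. f s (LSX_trunc \<mu> At \<epsilon> m T t \<omega>)) \<in> borel_measurable M"
    and "(\<lambda>\<omega>. f s (SX \<mu> A \<epsilon> u t \<omega>)) \<in> borel_measurable M"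
  by (intro borel_measurable_f_comp[OF assms], measurable)+

lemma mnorm1_A_le: "u \<in> {0..1} \<Longrightarrow> mnorm1 (A u j) \<le> real CARD('d) * B * \<theta> ^ nat \<bar>j\<bar>"
  using mnorm1_le_card_mult[of "A u j" "B * \<theta> ^ nat \<bar>j\<bar>"] A_bound by (simp add: mult.assoc)

lemma integral_abs_f_diff_le:
  assumes "s \<in> S" and [measurable]: "X \<in> borel_measurable M" "Y \<in> borel_measurable M"
    and b: "(\<integral>\<^sup>+\<omega>. ennreal (l1norm (X \<omega> - Y \<omega>)) \<partial>M) \<le> ennreal b" "0 \<le> b"
  shows "(\<integral>\<omega>. \<bar>f s (X \<omega>) - f s (Y \<omega>)\<bar> \<partial>M) \<le> CLip * b"
proof (rule integral_real_bounded)
  have [measurable]: "(\<lambda>\<omega>. f s (X \<omega>)) \<in> borel_measurable M"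
    by (rule borel_measurable_f_comp[OF assms(1,2)])
  have [measurable]: "(\<lambda>\<omega>. f s (Y \<omega>)) \<in> borel_measurable M"
    by (rule borel_measurable_f_comp[OF assms(1,3)])
  have "(\<integral>\<^sup>+\<omega>. ennreal \<bar>f s (X \<omega>) - f s (Y \<omega>)\<bar> \<partial>M) \<le> (\<integral>\<^sup>+\<omega>. ennreal CLip * ennreal (l1norm (X \<omega> - Y \<omega>)) \<partial>M)"
    using f_lipschitz[OF assms(1)]
    by (intro nn_integral_mono) (simp add: ennreal_mult'[symmetric] CLip_nonneg ennreal_leI)
  also have "\<dots> = ennreal CLip * (\<integral>\<^sup>+\<omega>. ennreal (l1norm (X \<omega> - Y \<omega>)) \<partial>M)"
    by (rule nn_integral_cmult) measurable
  also have "\<dots> \<le> ennreal (CLip * b)"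
    using b CLip_nonneg by (simp add: ennreal_mult mult_left_mono)
  finally show "(\<integral>\<^sup>+\<omega>. ennreal \<bar>f s (X \<omega>) - f s (Y \<omega>)\<bar> \<partial>M) \<le> ennreal (CLip * b)" .
qed (use CLip_nonneg b in simp)

subsection \<open>Geometric decay of the covariances\<close>

definition trunc_const :: real where
  "trunc_const = CLip * (mean_l1 * (B * (2 / (1 - \<theta>))))"

lemma trunc_const_nonneg: "0 \<le> trunc_const"
  unfolding trunc_const_def using CLip_nonneg mean_l1_nonneg B_nonneg theta by simp

lemma integral_f_LSX_trunc_error_le:
  assumes "s \<in> S" "1 \<le> t" "t \<le> int T"
  shows "(\<integral>\<omega>. \<bar>f s (LSX \<mu> At \<epsilon> T t \<omega>) - f s (LSX_trunc \<mu> At \<epsilon> m T t \<omega>)\<bar> \<partial>M) \<le> trunc_const * \<theta> ^ m"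
proof -
  let ?c' = "\<lambda>j. if \<bar>j\<bar> < int m then At T t j else 0"
  let ?\<gamma> = "\<lambda>j::int. B * (if int m \<le> \<bar>j\<bar> then \<theta> ^ nat \<bar>j\<bar> else 0)"
  note tail = summable_infsum_geometric_tail_int[OF theta, of m]
  note geometric = summable_infsum_geometric_int(1)[OF theta B_nonneg]
  have At_le: "mnorm1 (At T t j) \<le> B * \<theta> ^ nat \<bar>j\<bar>" for j using At_bound assms(2,3) by blast
  have trunc_le: "mnorm1 (?c' j) \<le> B * \<theta> ^ nat \<bar>j\<bar>" for j
    using At_le[of j] B_nonneg theta by auto
  have diff_le: "mnorm1 (At T t j - ?c' j) \<le> ?\<gamma> j" for j
    using At_le[of j] by auto
  have "(\<integral>\<^sup>+\<omega>. ennreal (l1norm (LSX \<mu> At \<epsilon> T t \<omega> - LSX_trunc \<mu> At \<epsilon> m T t \<omega>)) \<partial>M)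
      = (\<integral>\<^sup>+\<omega>. ennreal (l1norm (lin_proc (At T t) t \<omega> - lin_proc ?c' t \<omega>)) \<partial>M)"
    unfolding LSX_eq_lin_proc LSX_trunc_eq_lin_proc by simp
  also have "\<dots> \<le> ennreal (mean_l1 * infsum ?\<gamma> UNIV)"
    by (rule nn_integral_l1norm_lin_proc_diff_le[OF At_le geometric trunc_le geometric diff_le
          summable_on_cmult_right[OF tail(1)]])
  also have "\<dots> \<le> ennreal (mean_l1 * (B * (2 * \<theta> ^ m / (1 - \<theta>))))"
    using mult_left_mono[OF tail(2) B_nonneg]
    by (intro ennreal_leI mult_left_mono mean_l1_nonneg) (simp add: infsum_cmult_right[OF tail(1)])
  finally have "(\<integral>\<omega>. \<bar>f s (LSX \<mu> At \<epsilon> T t \<omega>) - f s (LSX_trunc \<mu> At \<epsilon> m T t \<omega>)\<bar> \<partial>M)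
      \<le> CLip * (mean_l1 * (B * (2 * \<theta> ^ m / (1 - \<theta>))))"
    using mean_l1_nonneg B_nonneg theta by (intro integral_abs_f_diff_le[OF assms(1)]) auto
  then show ?thesis by (simp add: trunc_const_def)
qed

lemma LSX_trunc_eq_restrict:
  "LSX_trunc \<mu> At \<epsilon> m T t \<omega> = \<mu> (real_of_int t / real T) +
     (\<Sum>j\<in>{j. \<bar>j\<bar> < int m}. At T t j *v (restrict (\<lambda>i. \<epsilon> i \<omega>) {i. \<bar>t - i\<bar> < int m}) (t - j))"
  unfolding LSX_trunc_def by (intro arg_cong2[where f = "(+)"] refl sum.cong) auto

text \<open>Truncated at \<open>m\<close>, the variables at times \<open>t\<close> and \<open>t + h\<close> with \<open>2 m \<le> \<bar>h\<bar>\<close> are functions of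
  disjoint blocks of innovations.\<close>

lemma Cov_f_LSX_trunc_eq_0:
  assumes t: "1 \<le> t" "t \<le> int T" and th: "1 \<le> t + h" "t + h \<le> int T" and m: "2 * int m \<le> \<bar>h\<bar>"
  shows "Cov M (\<lambda>\<omega>. f s1 (LSX_trunc \<mu> At \<epsilon> m T t \<omega>)) (\<lambda>\<omega>. f s2 (LSX_trunc \<mu> At \<epsilon> m T (t + h) \<omega>)) = 0"
proof -
  define I1 where "I1 = {i. \<bar>t - i\<bar> < int m}"
  define I2 where "I2 = {i. \<bar>t + h - i\<bar> < int m}"
  define g1 where "g1 x = f s1 (\<mu> (real_of_int t / real T) + (\<Sum>j\<in>{j. \<bar>j\<bar> < int m}. At T t j *v x (t - j)))" for x
  define g2 where "g2 x = f s2 (\<mu> (real_of_int (t + h) / real T)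
    + (\<Sum>j\<in>{j. \<bar>j\<bar> < int m}. At T (t + h) j *v x (t + h - j)))" for x
  have g1_eq: "f s1 (LSX_trunc \<mu> At \<epsilon> m T t \<omega>) = g1 (restrict (\<lambda>i. \<epsilon> i \<omega>) I1)" for \<omega>
    unfolding g1_def I1_def LSX_trunc_eq_restrict ..
  have g2_eq: "f s2 (LSX_trunc \<mu> At \<epsilon> m T (t + h) \<omega>) = g2 (restrict (\<lambda>i. \<epsilon> i \<omega>) I2)" for \<omega>
    unfolding g2_def I2_def LSX_trunc_eq_restrict ..
  have component: "(\<lambda>x::int \<Rightarrow> real^'d. x i) \<in> borel_measurable (PiM I (\<lambda>_. borel))" if "i \<in> I" for i I
    using measurable_component_singleton[OF that, of "\<lambda>_. borel"] by simp
  have "I1 \<inter> I2 = {}" unfolding I1_def I2_def using m by auto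
  moreover have "g1 \<in> borel_measurable (PiM I1 (\<lambda>_. borel))" unfolding g1_def
    by (intro borel_measurable_f_comp[OF s1] borel_measurable_add borel_measurable_const
        borel_measurable_sum borel_measurable_mult_vec component) (auto simp: I1_def)
  moreover have "g2 \<in> borel_measurable (PiM I2 (\<lambda>_. borel))" unfolding g2_def
    by (intro borel_measurable_f_comp[OF s2] borel_measurable_add borel_measurable_const
        borel_measurable_sum borel_measurable_mult_vec component) (auto simp: I2_def)
  moreover have "integrable M (\<lambda>\<omega>. f s1 (LSX_trunc \<mu> At \<epsilon> m T t \<omega>))"
    by (rule integrable_of_moment[OF borel_measurable_f_processes(2)[OF s1]
          moment_LSX_trunc[OF s1 t] K_nonneg delta(1)])
  moreover have "integrable M (\<lambda>\<omega>. f s2 (LSX_trunc \<mu> At \<epsilon> m T (t + h) \<omega>))"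
    by (rule integrable_of_moment[OF borel_measurable_f_processes(2)[OF s2]
          moment_LSX_trunc[OF s2 th] K_nonneg delta(1)])
  ultimately show ?thesis
    unfolding g1_eq g2_eq by (rule Cov_indep_restrict_eq_0)
qed

abbreviation perturb_bound :: "real \<Rightarrow> real \<Rightarrow> real" where
  "perturb_bound \<eta> R \<equiv> R * \<eta> + R powr (-\<delta>) * (4 * K) + \<eta> * (1 + K)"

lemma perturb_bound_nonneg: "0 \<le> \<eta> \<Longrightarrow> 0 < R \<Longrightarrow> 0 \<le> perturb_bound \<eta> R"
  using K_nonneg by (intro add_nonneg_nonneg mult_nonneg_nonneg) auto

definition decay_rate :: real where
  "decay_rate = \<theta> powr (\<delta> / 4)"

definition decay_const :: real where
  "decay_const = 2 * (trunc_const + 4 * K + trunc_const * (1 + K)) * \<theta> powr (-\<delta> / 4)"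

lemma decay_const_nonneg: "0 \<le> decay_const"
  unfolding decay_const_def using trunc_const_nonneg K_nonneg by simp

lemma decay_rate: "0 < decay_rate" "decay_rate < 1"
  unfolding decay_rate_def using theta delta powr_less_mono2[of "\<delta> / 4" \<theta> 1] by auto

text \<open>Truncating both variables at \<open>m = \<bar>h\<bar> div 2\<close> makes them uncorrelated; each truncation costs
  \<open>perturb_bound (trunc_const * \<theta> ^ m) R\<close>, and the level \<open>R = \<theta> powr (- m / 2)\<close> balances the two
  parts of that bound.\<close>

lemma abs_Cov_LSX_le_geometric:
  assumes t: "1 \<le> t" "t \<le> int T" and th: "1 \<le> t + h" "t + h \<le> int T"
  shows "\<bar>Cov M (\<lambda>\<omega>. f s1 (LSX \<mu> At \<epsilon> T t \<omega>)) (\<lambda>\<omega>. f s2 (LSX \<mu> At \<epsilon> T (t + h) \<omega>))\<bar>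
    \<le> decay_const * decay_rate ^ nat \<bar>h\<bar>"
proof -
  define m where "m = nat \<bar>h\<bar> div 2"
  define \<eta> where "\<eta> = trunc_const * \<theta> ^ m"
  define R where "R = \<theta> powr (-(m/2))"
  have R: "0 < R" unfolding R_def using theta by simp
  let ?Y = "\<lambda>\<omega>. f s1 (LSX \<mu> At \<epsilon> T t \<omega>)" and ?Y' = "\<lambda>\<omega>. f s1 (LSX_trunc \<mu> At \<epsilon> m T t \<omega>)"
  let ?Z = "\<lambda>\<omega>. f s2 (LSX \<mu> At \<epsilon> T (t + h) \<omega>)" and ?Z' = "\<lambda>\<omega>. f s2 (LSX_trunc \<mu> At \<epsilon> m T (t + h) \<omega>)"
  note meas = borel_measurable_f_processes
  have "\<bar>Cov M ?Y ?Z - Cov M ?Y' ?Z\<bar> \<le> perturb_bound \<eta> R"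
    by (rule Cov_perturb_le[OF meas(1)[OF s1] meas(2)[OF s1] meas(1)[OF s2]
          moment_LSX[OF s1 t] moment_LSX_trunc[OF s1 t] moment_LSX[OF s2 th] K_nonneg delta(1) R])
       (unfold \<eta>_def, rule integral_f_LSX_trunc_error_le[OF s1 t])
  moreover have "\<bar>Cov M ?Z ?Y' - Cov M ?Z' ?Y'\<bar> \<le> perturb_bound \<eta> R"
    by (rule Cov_perturb_le[OF meas(1)[OF s2] meas(2)[OF s2] meas(2)[OF s1]
          moment_LSX[OF s2 th] moment_LSX_trunc[OF s2 th] moment_LSX_trunc[OF s1 t] K_nonneg delta(1) R])
       (unfold \<eta>_def, rule integral_f_LSX_trunc_error_le[OF s2 th])
  moreover have "Cov M ?Y' ?Z' = 0"
    by (rule Cov_f_LSX_trunc_eq_0[OF t th]) (simp add: m_def)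
  ultimately have "\<bar>Cov M ?Y ?Z\<bar> \<le> 2 * perturb_bound \<eta> R"
    using Cov_commute[of M ?Y' ?Z] Cov_commute[of M ?Y' ?Z'] by (simp add: abs_le_iff)
  also have "\<dots> \<le> decay_const * decay_rate ^ nat \<bar>h\<bar>"
    using truncation_bound_le_geometric[OF theta delta(1) delta_le_1 trunc_const_nonneg K_nonneg, of "nat \<bar>h\<bar>" m]
    unfolding \<eta>_def R_def decay_const_def decay_rate_def m_def by (simp add: mult.assoc)
  finally show ?thesis .
qed

subsection \<open>Approximation by the stationary processes\<close>

lemma unit_interval_of_index: "1 \<le> t \<Longrightarrow> t \<le> int T \<Longrightarrow> real_of_int t / real T \<in> {0..1}"
  by (auto simp: divide_le_eq_1)

definition approx_const :: "int \<Rightarrow> real" where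
  "approx_const h = CLip * (Lmu * \<bar>real_of_int h\<bar>
     + mean_l1 * (B + real CARD('d) * B * \<bar>real_of_int h\<bar>) * (2 / (1 - \<theta>)))"

lemma approx_const_nonneg: "0 \<le> approx_const h"
  unfolding approx_const_def using CLip_nonneg Lmu_nonneg mean_l1_nonneg B_nonneg theta by simp

lemma approx_const_mono: "approx_const 0 \<le> approx_const h"
  unfolding approx_const_def
  by (intro mult_left_mono add_mono mult_right_mono add_left_mono)
     (use CLip_nonneg Lmu_nonneg mean_l1_nonneg B_nonneg theta in auto)

lemma mnorm1_At_A_le:
  assumes t: "1 \<le> t" "t \<le> int T" and k: "1 \<le> k" "k \<le> int T"
  shows "mnorm1 (At T k j - A (real_of_int t / real T) j)
    \<le> (B + real CARD('d) * B * \<bar>real_of_int (k - t)\<bar>) / real T * \<theta> ^ nat \<bar>j\<bar>"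
proof -
  let ?u = "real_of_int t / real T" and ?v = "real_of_int k / real T"
  have T: "0 < real T" using t by linarith
  have dist: "\<bar>?v - ?u\<bar> = \<bar>real_of_int (k - t)\<bar> / real T"
    using T by (simp add: diff_divide_distrib[symmetric])
  have "mnorm1 (At T k j - A ?u j) \<le> mnorm1 (At T k j - A ?v j) + mnorm1 (A ?v j - A ?u j)"
    using mnorm1_triangle[of "At T k j - A ?v j" "A ?v j - A ?u j"] by simp
  also have "\<dots> \<le> B / real T * \<theta> ^ nat \<bar>j\<bar>
      + real CARD('d) * (B * \<theta> ^ nat \<bar>j\<bar> * (\<bar>real_of_int (k - t)\<bar> / real T))"
    using At_A[OF k, of j] T A_lipschitz[OF unit_interval_of_index[OF k] unit_interval_of_index[OF t], of j] dist
    by (intro add_mono) (simp_all add: pos_le_divide_eq mult.commute)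
  also have "\<dots> = (B + real CARD('d) * B * \<bar>real_of_int (k - t)\<bar>) / real T * \<theta> ^ nat \<bar>j\<bar>"
    by (simp add: add_divide_distrib algebra_simps)
  finally show ?thesis .
qed

lemma nn_integral_l1norm_LSX_SX_le:
  assumes t: "1 \<le> t" "t \<le> int T" and k: "1 \<le> k" "k \<le> int T"
  shows "(\<integral>\<^sup>+\<omega>. ennreal (l1norm (LSX \<mu> At \<epsilon> T k \<omega> - SX \<mu> A \<epsilon> (real_of_int t / real T) k \<omega>)) \<partial>M)
    \<le> ennreal (Lmu * \<bar>real_of_int (k - t)\<bar> / real T
       + mean_l1 * ((B + real CARD('d) * B * \<bar>real_of_int (k - t)\<bar>) / real T) * (2 / (1 - \<theta>)))"
proof -
  let ?u = "real_of_int t / real T" and ?v = "real_of_int k / real T"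
  let ?c = "(B + real CARD('d) * B * \<bar>real_of_int (k - t)\<bar>) / real T"
  let ?lin_diff = "\<lambda>\<omega>. lin_proc (At T k) k \<omega> - lin_proc (A ?u) k \<omega>"
  have T: "0 < real T" using t by linarith
  have c: "0 \<le> ?c" using B_nonneg T by simp
  have "(\<integral>\<^sup>+\<omega>. ennreal (l1norm (LSX \<mu> At \<epsilon> T k \<omega> - SX \<mu> A \<epsilon> ?u k \<omega>)) \<partial>M)
      \<le> (\<integral>\<^sup>+\<omega>. ennreal (l1norm (\<mu> ?v - \<mu> ?u)) + ennreal (l1norm (?lin_diff \<omega>)) \<partial>M)"
  proof (rule nn_integral_mono)
    fix \<omega>
    have "LSX \<mu> At \<epsilon> T k \<omega> - SX \<mu> A \<epsilon> ?u k \<omega> = (\<mu> ?v - \<mu> ?u) + ?lin_diff \<omega>"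
      unfolding LSX_eq_lin_proc SX_eq_lin_proc by simp
    then show "ennreal (l1norm (LSX \<mu> At \<epsilon> T k \<omega> - SX \<mu> A \<epsilon> ?u k \<omega>))
        \<le> ennreal (l1norm (\<mu> ?v - \<mu> ?u)) + ennreal (l1norm (?lin_diff \<omega>))"
      using l1norm_triangle[of "\<mu> ?v - \<mu> ?u" "?lin_diff \<omega>"]
      by (simp add: ennreal_plus[symmetric] l1norm_nonneg ennreal_leI del: ennreal_plus)
  qed
  also have "\<dots> = ennreal (l1norm (\<mu> ?v - \<mu> ?u)) + (\<integral>\<^sup>+\<omega>. ennreal (l1norm (?lin_diff \<omega>)) \<partial>M)"
    by (subst nn_integral_add) (auto simp: emeasure_space_1)
  also have "\<dots> \<le> ennreal (Lmu * \<bar>real_of_int (k - t)\<bar> / real T) + ennreal (mean_l1 * ?c * (2 / (1 - \<theta>)))"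
  proof (rule add_mono)
    have "\<bar>?v - ?u\<bar> = \<bar>real_of_int (k - t)\<bar> / real T"
      using T by (simp add: diff_divide_distrib[symmetric])
    then show "ennreal (l1norm (\<mu> ?v - \<mu> ?u)) \<le> ennreal (Lmu * \<bar>real_of_int (k - t)\<bar> / real T)"
      using mu_lipschitz[OF unit_interval_of_index[OF k] unit_interval_of_index[OF t]] by (intro ennreal_leI) simp
    have "(\<integral>\<^sup>+\<omega>. ennreal (l1norm (?lin_diff \<omega>)) \<partial>M) \<le> ennreal (mean_l1 * infsum (\<lambda>j::int. ?c * \<theta> ^ nat \<bar>j\<bar>) UNIV)"
      using B_nonneg
      by (intro nn_integral_l1norm_lin_proc_diff_le[OF At_bound[OF k] _ mnorm1_A_le[OF unit_interval_of_index[OF t]]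
          _ mnorm1_At_A_le[OF t k]] summable_infsum_geometric_int(1)[OF theta c]
          summable_infsum_geometric_int(1)[OF theta]) simp_all
    also have "\<dots> \<le> ennreal (mean_l1 * ?c * (2 / (1 - \<theta>)))"
      using mult_left_mono[OF summable_infsum_geometric_int(2)[OF theta c] mean_l1_nonneg]
      by (intro ennreal_leI) (simp only: mult.assoc)
    finally show "(\<integral>\<^sup>+\<omega>. ennreal (l1norm (?lin_diff \<omega>)) \<partial>M) \<le> ennreal (mean_l1 * ?c * (2 / (1 - \<theta>)))" .
  qed
  also have "\<dots> = ennreal (Lmu * \<bar>real_of_int (k - t)\<bar> / real T + mean_l1 * ?c * (2 / (1 - \<theta>)))"
    using Lmu_nonneg T mean_l1_nonneg B_nonneg theta
    by (intro ennreal_plus[symmetric] mult_nonneg_nonneg divide_nonneg_nonneg) auto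
  finally show ?thesis .
qed

lemma integral_f_LSX_SX_error_le:
  assumes "s \<in> S" and t: "1 \<le> t" "t \<le> int T" and k: "1 \<le> k" "k \<le> int T"
  shows "(\<integral>\<omega>. \<bar>f s (LSX \<mu> At \<epsilon> T k \<omega>) - f s (SX \<mu> A \<epsilon> (real_of_int t / real T) k \<omega>)\<bar> \<partial>M)
    \<le> approx_const (k - t) / real T"
proof -
  have T: "0 < real T" using t by linarith
  have "(\<integral>\<omega>. \<bar>f s (LSX \<mu> At \<epsilon> T k \<omega>) - f s (SX \<mu> A \<epsilon> (real_of_int t / real T) k \<omega>)\<bar> \<partial>M)
    \<le> CLip * (Lmu * \<bar>real_of_int (k - t)\<bar> / real T
       + mean_l1 * ((B + real CARD('d) * B * \<bar>real_of_int (k - t)\<bar>) / real T) * (2 / (1 - \<theta>)))"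
    using Lmu_nonneg mean_l1_nonneg B_nonneg theta T
    by (intro integral_abs_f_diff_le[OF assms(1) _ _ nn_integral_l1norm_LSX_SX_le[OF t k]]) auto
  also have "\<dots> = approx_const (k - t) / real T"
    unfolding approx_const_def using T theta by (simp add: field_simps)
  finally show ?thesis .
qed

definition SX_of_seq :: "real \<Rightarrow> int \<Rightarrow> (int \<Rightarrow> real^'d) \<Rightarrow> real^'d" where
  "SX_of_seq u h x = \<mu> u + infsum (\<lambda>j. A u j *v x (h - j)) UNIV"

lemma borel_measurable_SX_of_seq [measurable]: "SX_of_seq u h \<in> borel_measurable seq_space"
  unfolding SX_of_seq_def[abs_def] by measurable

lemma SX_eq_SX_of_seq: "SX \<mu> A \<epsilon> u (t + h) \<omega> = SX_of_seq u h (shifted_eps t \<omega>)"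
  by (simp add: SX_def SX_of_seq_def shifted_eps_def algebra_simps)

lemma moment_SX_stationary:
  assumes "s \<in> S" "u \<in> {0..1}"
  shows "abs_moment_2_plus M \<delta> (\<lambda>\<omega>. f s (SX \<mu> A \<epsilon> u k \<omega>)) \<le> ennreal K"
proof -
  have "(\<lambda>x. f s (SX_of_seq u 0 x)) \<in> borel_measurable seq_space"
    by (rule borel_measurable_f_comp[OF assms(1)]) measurable
  from abs_moment_2_plus_shifted_eps[OF this, of \<delta> k]
  have "abs_moment_2_plus M \<delta> (\<lambda>\<omega>. f s (SX \<mu> A \<epsilon> u k \<omega>)) = abs_moment_2_plus M \<delta> (\<lambda>\<omega>. f s (SX \<mu> A \<epsilon> u 0 \<omega>))"
    using SX_eq_SX_of_seq[of u k 0] SX_eq_SX_of_seq[of u 0 0] by simp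
  then show ?thesis using moment_SX[OF assms] by simp
qed

lemma Cov_SX_stationary:
  "Cov M (\<lambda>\<omega>. f s1 (SX \<mu> A \<epsilon> u t \<omega>)) (\<lambda>\<omega>. f s2 (SX \<mu> A \<epsilon> u (t + h) \<omega>))
   = Cov M (\<lambda>\<omega>. f s1 (SX \<mu> A \<epsilon> u 0 \<omega>)) (\<lambda>\<omega>. f s2 (SX \<mu> A \<epsilon> u h \<omega>))"
proof -
  have "(\<lambda>x. f s1 (SX_of_seq u 0 x)) \<in> borel_measurable seq_space"
    by (rule borel_measurable_f_comp[OF s1]) measurable
  moreover have "(\<lambda>x. f s2 (SX_of_seq u h x)) \<in> borel_measurable seq_space"
    by (rule borel_measurable_f_comp[OF s2]) measurable
  ultimately have "Cov M (\<lambda>\<omega>. f s1 (SX_of_seq u 0 (shifted_eps t \<omega>))) (\<lambda>\<omega>. f s2 (SX_of_seq u h (shifted_eps t \<omega>)))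
    = Cov M (\<lambda>\<omega>. f s1 (SX_of_seq u 0 (shifted_eps 0 \<omega>))) (\<lambda>\<omega>. f s2 (SX_of_seq u h (shifted_eps 0 \<omega>)))"
    by (rule Cov_shifted_eps)
  then show ?thesis
    using SX_eq_SX_of_seq[of u t 0] SX_eq_SX_of_seq[of u t h] SX_eq_SX_of_seq[of u 0 0] SX_eq_SX_of_seq[of u 0 h]
    by simp
qed

lemma abs_Cov_LSX_SX_diff_le:
  assumes t: "1 \<le> t" "t \<le> int T" and th: "1 \<le> t + h" "t + h \<le> int T" and R: "0 < R"
  shows "\<bar>Cov M (\<lambda>\<omega>. f s1 (LSX \<mu> At \<epsilon> T t \<omega>)) (\<lambda>\<omega>. f s2 (LSX \<mu> At \<epsilon> T (t + h) \<omega>))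
      - Cov M (\<lambda>\<omega>. f s1 (SX \<mu> A \<epsilon> (real_of_int t / real T) 0 \<omega>))
          (\<lambda>\<omega>. f s2 (SX \<mu> A \<epsilon> (real_of_int t / real T) h \<omega>))\<bar>
    \<le> 2 * perturb_bound (approx_const h / real T) R"
proof -
  let ?u = "real_of_int t / real T" and ?\<eta> = "approx_const h / real T"
  have u: "?u \<in> {0..1}" by (rule unit_interval_of_index[OF t])
  let ?Y = "\<lambda>\<omega>. f s1 (LSX \<mu> At \<epsilon> T t \<omega>)" and ?Y' = "\<lambda>\<omega>. f s1 (SX \<mu> A \<epsilon> ?u t \<omega>)"
  let ?Z = "\<lambda>\<omega>. f s2 (LSX \<mu> At \<epsilon> T (t + h) \<omega>)" and ?Z' = "\<lambda>\<omega>. f s2 (SX \<mu> A \<epsilon> ?u (t + h) \<omega>)"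
  note meas = borel_measurable_f_processes
  have "(\<integral>\<omega>. \<bar>?Y \<omega> - ?Y' \<omega>\<bar> \<partial>M) \<le> ?\<eta>"
    using integral_f_LSX_SX_error_le[OF s1 t t] approx_const_mono[of h]
    by (simp add: divide_right_mono order_trans)
  then have d1: "\<bar>Cov M ?Y ?Z - Cov M ?Y' ?Z\<bar> \<le> perturb_bound ?\<eta> R"
    by (intro Cov_perturb_le[OF meas(1)[OF s1] meas(3)[OF s1] meas(1)[OF s2]
          moment_LSX[OF s1 t] moment_SX_stationary[OF s1 u] moment_LSX[OF s2 th] K_nonneg delta(1) R])
  have "\<bar>Cov M ?Z ?Y' - Cov M ?Z' ?Y'\<bar> \<le> perturb_bound ?\<eta> R"
    using integral_f_LSX_SX_error_le[OF s2 t th]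
    by (intro Cov_perturb_le[OF meas(1)[OF s2] meas(3)[OF s2] meas(3)[OF s1]
          moment_LSX[OF s2 th] moment_SX_stationary[OF s2 u] moment_SX_stationary[OF s1 u] K_nonneg delta(1) R]) simp
  then have d2: "\<bar>Cov M ?Y' ?Z - Cov M (\<lambda>\<omega>. f s1 (SX \<mu> A \<epsilon> ?u 0 \<omega>)) (\<lambda>\<omega>. f s2 (SX \<mu> A \<epsilon> ?u h \<omega>))\<bar>
      \<le> perturb_bound ?\<eta> R"
    by (simp only: Cov_commute[of M ?Z ?Y'] Cov_commute[of M ?Z' ?Y'] Cov_SX_stationary)
  let ?C = "Cov M (\<lambda>\<omega>. f s1 (SX \<mu> A \<epsilon> ?u 0 \<omega>)) (\<lambda>\<omega>. f s2 (SX \<mu> A \<epsilon> ?u h \<omega>))"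
  have "\<bar>Cov M ?Y ?Z - ?C\<bar> \<le> \<bar>Cov M ?Y ?Z - Cov M ?Y' ?Z\<bar> + \<bar>Cov M ?Y' ?Z - ?C\<bar>"
    using abs_triangle_ineq[of "Cov M ?Y ?Z - Cov M ?Y' ?Z" "Cov M ?Y' ?Z - ?C"] by simp
  also have "\<dots> \<le> perturb_bound ?\<eta> R + perturb_bound ?\<eta> R"
    by (rule add_mono[OF d1 d2])
  finally show ?thesis by (simp only: mult_2)
qed

subsection \<open>Convergence of the covariance of the weighted sums\<close>

definition cov_lag :: "nat \<Rightarrow> int \<Rightarrow> real" where
  "cov_lag T h = (\<Sum>t\<in>{1..int T}. w T t * w T (t + h) *
     Cov M (\<lambda>\<omega>. f s1 (LSX \<mu> At \<epsilon> T t \<omega>)) (\<lambda>\<omega>. f s2 (LSX \<mu> At \<epsilon> T (t + h) \<omega>)))"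

definition cov_lag_stat :: "nat \<Rightarrow> int \<Rightarrow> real" where
  "cov_lag_stat T h = (\<Sum>t\<in>{1..int T}. w T t * w T (t + h) *
     Cov M (\<lambda>\<omega>. f s1 (SX \<mu> A \<epsilon> (real_of_int t / real T) 0 \<omega>))
       (\<lambda>\<omega>. f s2 (SX \<mu> A \<epsilon> (real_of_int t / real T) h \<omega>)))"

lemma abs_lag_weighted_sum_le:
  assumes "\<And>t. 1 \<le> t \<Longrightarrow> t \<le> int T \<Longrightarrow> 1 \<le> t + h \<Longrightarrow> t + h \<le> int T \<Longrightarrow> \<bar>F t\<bar> \<le> X" and "0 \<le> X"
  shows "\<bar>\<Sum>t\<in>{1..int T}. w T t * w T (t + h) * F t\<bar> \<le> Cw\<^sup>2 * X"
proof -
  have "\<bar>w T t * w T (t + h) * F t\<bar> \<le> w T t * w T (t + h) * X" for t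
  proof (cases "1 \<le> t \<and> t \<le> int T \<and> 1 \<le> t + h \<and> t + h \<le> int T")
    case True
    then show ?thesis using assms(1) w_nonneg by (simp add: abs_mult mult_left_mono)
  next
    case False
    then have "w T t * w T (t + h) = 0" using w_support[of t T] w_support[of "t + h" T] by force
    then show ?thesis by auto
  qed
  then have "\<bar>\<Sum>t\<in>{1..int T}. w T t * w T (t + h) * F t\<bar> \<le> (\<Sum>t\<in>{1..int T}. w T t * w T (t + h)) * X"
    by (simp add: order_trans[OF sum_abs sum_mono] sum_distrib_right)
  also have "\<dots> \<le> Cw\<^sup>2 * X" by (intro mult_right_mono lag_weights_le assms(2))
  finally show ?thesis .
qed

lemma abs_cov_lag_le: "\<bar>cov_lag T h\<bar> \<le> Cw\<^sup>2 * (decay_const * decay_rate ^ nat \<bar>h\<bar>)"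
  unfolding cov_lag_def
  by (rule abs_lag_weighted_sum_le[OF abs_Cov_LSX_le_geometric]) (use decay_const_nonneg decay_rate in simp_all)

lemma abs_cov_lag_diff_le:
  assumes "0 < R"
  shows "\<bar>cov_lag T h - cov_lag_stat T h\<bar> \<le> Cw\<^sup>2 * (2 * perturb_bound (approx_const h / real T) R)"
proof -
  have "cov_lag T h - cov_lag_stat T h = (\<Sum>t\<in>{1..int T}. w T t * w T (t + h) *
      (Cov M (\<lambda>\<omega>. f s1 (LSX \<mu> At \<epsilon> T t \<omega>)) (\<lambda>\<omega>. f s2 (LSX \<mu> At \<epsilon> T (t + h) \<omega>))
       - Cov M (\<lambda>\<omega>. f s1 (SX \<mu> A \<epsilon> (real_of_int t / real T) 0 \<omega>))
           (\<lambda>\<omega>. f s2 (SX \<mu> A \<epsilon> (real_of_int t / real T) h \<omega>))))"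
    unfolding cov_lag_def cov_lag_stat_def by (simp add: sum_subtractf[symmetric] algebra_simps)
  also have "\<bar>\<dots>\<bar> \<le> Cw\<^sup>2 * (2 * perturb_bound (approx_const h / real T) R)"
    using approx_const_nonneg assms
    by (intro abs_lag_weighted_sum_le abs_Cov_LSX_SX_diff_le mult_nonneg_nonneg perturb_bound_nonneg) auto
  finally show ?thesis .
qed

lemma cov_lag_diff_tendsto_0: "(\<lambda>T. cov_lag T h - cov_lag_stat T h) \<longlonglongrightarrow> 0"
proof (rule tendstoI)
  fix r :: real assume "0 < r"
  \<comment> \<open>First fix a level \<open>R\<close> at which the moment part of the bound is below \<open>r\<close>, then let \<open>T \<rightarrow> \<infinity>\<close>.\<close>
  have "((\<lambda>R. R powr (-\<delta>)) \<longlongrightarrow> 0) at_top"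
    using delta by (intro tendsto_neg_powr filterlim_ident) auto
  then have "((\<lambda>R. Cw\<^sup>2 * (2 * (R powr (-\<delta>) * (4 * K)))) \<longlongrightarrow> Cw\<^sup>2 * (2 * (0 * (4 * K)))) at_top"
    by (intro tendsto_mult_left tendsto_mult_right)
  then have "\<forall>\<^sub>F R in at_top. Cw\<^sup>2 * (2 * (R powr (-\<delta>) * (4 * K))) < r"
    by (rule order_tendstoD(2)) (use \<open>0 < r\<close> in simp)
  then obtain N where N: "\<And>R. N \<le> R \<Longrightarrow> Cw\<^sup>2 * (2 * (R powr (-\<delta>) * (4 * K))) < r"
    unfolding eventually_at_top_linorder by blast
  define R where "R = max N 1"
  have R: "0 < R" "Cw\<^sup>2 * (2 * (R powr (-\<delta>) * (4 * K))) < r"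
    using N[of R] by (auto simp: R_def)
  have "(\<lambda>T. approx_const h / real T) \<longlonglongrightarrow> 0"
    by (rule tendsto_divide_0[OF tendsto_const filterlim_at_top_imp_at_infinity[OF filterlim_real_sequentially]])
  then have "(\<lambda>T. Cw\<^sup>2 * (2 * perturb_bound (approx_const h / real T) R)) \<longlonglongrightarrow> Cw\<^sup>2 * (2 * perturb_bound 0 R)"
    by (intro tendsto_mult_left tendsto_add tendsto_mult_right tendsto_const)
  then have "\<forall>\<^sub>F T in sequentially. Cw\<^sup>2 * (2 * perturb_bound (approx_const h / real T) R) < r"
    by (rule order_tendstoD(2)) (use R(2) in simp)
  then show "\<forall>\<^sub>F T in sequentially. dist (cov_lag T h - cov_lag_stat T h) 0 < r"
  proof (rule eventually_mono)
    fix T assume "Cw\<^sup>2 * (2 * perturb_bound (approx_const h / real T) R) < r"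
    then show "dist (cov_lag T h - cov_lag_stat T h) 0 < r"
      using abs_cov_lag_diff_le[OF R(1), of T h] unfolding dist_real_def diff_zero by linarith
  qed
qed

lemma sum_window_reindex:
  fixes F :: "int \<Rightarrow> 'a::comm_monoid_add"
  assumes "t \<in> {1..int T}" "\<And>s. s \<notin> {1..int T} \<Longrightarrow> F s = 0"
  shows "(\<Sum>s\<in>{1..int T}. F s) = (\<Sum>h\<in>{-int T..int T}. F (t + h))"
proof -
  have "(\<Sum>h\<in>{-int T..int T}. F (t + h)) = (\<Sum>s\<in>{t - int T..t + int T}. F s)"
    by (rule sum.reindex_bij_witness[of _ "\<lambda>s. s - t" "\<lambda>h. t + h"]) auto
  also have "\<dots> = (\<Sum>s\<in>{1..int T}. F s)"
    using assms by (intro sum.mono_neutral_right) auto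
  finally show ?thesis ..
qed

lemma Cov_weighted_sums_eq_infsum_cov_lag:
  "Cov M (\<lambda>\<omega>. \<Sum>t\<in>{1..int T}. w T t * f s1 (LSX \<mu> At \<epsilon> T t \<omega>))
         (\<lambda>\<omega>. \<Sum>t\<in>{1..int T}. w T t * f s2 (LSX \<mu> At \<epsilon> T t \<omega>))
   = infsum (cov_lag T) UNIV"
proof -
  let ?I = "{1..int T}"
  let ?U = "\<lambda>t \<omega>. f s1 (LSX \<mu> At \<epsilon> T t \<omega>)" and ?V = "\<lambda>t \<omega>. f s2 (LSX \<mu> At \<epsilon> T t \<omega>)"
  note meas = borel_measurable_f_processes(1)
  have "Cov M (\<lambda>\<omega>. \<Sum>t\<in>?I. w T t * ?U t \<omega>) (\<lambda>\<omega>. \<Sum>t\<in>?I. w T t * ?V t \<omega>)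
      = (\<Sum>t\<in>?I. \<Sum>s\<in>?I. w T t * w T s * Cov M (?U t) (?V s))"
    using meas[OF s1] meas[OF s2] moment_LSX[OF s1] moment_LSX[OF s2]
    by (intro Cov_sum_sum integrable_of_moment[OF _ _ K_nonneg delta(1)]
        integrable_mult_of_moments[OF _ _ _ _ K_nonneg delta(1)]) auto
  also have "\<dots> = (\<Sum>t\<in>?I. \<Sum>h\<in>{-int T..int T}. w T t * w T (t + h) * Cov M (?U t) (?V (t + h)))"
    using w_support by (intro sum.cong refl sum_window_reindex) auto
  also have "\<dots> = (\<Sum>h\<in>{-int T..int T}. cov_lag T h)"
    unfolding cov_lag_def by (rule sum.swap)
  also have "\<dots> = infsum (cov_lag T) UNIV"
  proof -
    have "cov_lag T h = 0" if "h \<notin> {-int T..int T}" for h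
      unfolding cov_lag_def using that w_support by (intro sum.neutral) auto
    then have "infsum (cov_lag T) UNIV = infsum (cov_lag T) {-int T..int T}"
      by (intro infsum_cong_neutral) auto
    then show ?thesis by simp
  qed
  finally show ?thesis .
qed

theorem Cov_weighted_sums_tendsto:
  assumes "\<And>h. (\<lambda>T. cov_lag_stat T h) \<longlonglongrightarrow> L h"
  shows "L summable_on UNIV \<and>
    (\<lambda>T. Cov M (\<lambda>\<omega>. \<Sum>t\<in>{1..int T}. w T t * f s1 (LSX \<mu> At \<epsilon> T t \<omega>))
                (\<lambda>\<omega>. \<Sum>t\<in>{1..int T}. w T t * f s2 (LSX \<mu> At \<epsilon> T t \<omega>)))
      \<longlonglongrightarrow> infsum L UNIV"
proof -
  have cov_lag_lim: "(\<lambda>T. cov_lag T h) \<longlonglongrightarrow> L h" for h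
    using tendsto_add[OF cov_lag_diff_tendsto_0[of h] assms[of h]] by simp
  have dominating: "(\<lambda>h. Cw\<^sup>2 * (decay_const * decay_rate ^ nat \<bar>h\<bar>)) summable_on UNIV"
    by (intro summable_on_cmult_right summable_infsum_geometric_int(1) decay_rate decay_const_nonneg)
  show ?thesis
    using tendsto_infsum_dominated[OF dominating abs_cov_lag_le cov_lag_lim]
    unfolding Cov_weighted_sums_eq_infsum_cov_lag by simp
qed

end

theorem lemma4:
  fixes M :: "'w measure"
    and \<epsilon> :: "int \<Rightarrow> 'w \<Rightarrow> real^'d"
    and \<mu> :: "real \<Rightarrow> real^'d"
    and At :: "nat \<Rightarrow> int \<Rightarrow> int \<Rightarrow> real^'d^'d"
    and A :: "real \<Rightarrow> int \<Rightarrow> real^'d^'d"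
    and \<theta> B :: real
    and w :: "nat \<Rightarrow> int \<Rightarrow> real"
    and dT :: "nat \<Rightarrow> nat"
    and Cw :: real
    and S :: "(ereal^'d) set"
    and \<rho> :: "ereal^'d \<Rightarrow> ereal^'d \<Rightarrow> real"
    and f :: "ereal^'d \<Rightarrow> real^'d \<Rightarrow> real"
    and CLip \<delta> :: real
    and s1 s2 :: "ereal^'d"
    and L :: "int \<Rightarrow> real"
  assumes prob: "prob_space M"
    \<comment> \<open>(LS): innovations i.i.d., centred, integrable\<close>
    and eps_meas: "\<And>t. \<epsilon> t \<in> borel_measurable M"
    and eps_indep: "prob_space.indep_vars M (\<lambda>_. borel) \<epsilon> UNIV"
    and eps_ident: "\<And>t. distr M borel (\<epsilon> t) = distr M borel (\<epsilon> 0)"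
    and eps_int: "integrable M (\<epsilon> 0)"
    and eps_centred: "(\<integral>\<omega>. \<epsilon> 0 \<omega> \<partial>M) = 0"
    and mu_C1: "\<exists>D. C1_on_unit_with \<mu> D"
    and theta: "0 < \<theta>" "\<theta> < 1"
    and At_bound: "\<And>T t j. 1 \<le> t \<Longrightarrow> t \<le> int T \<Longrightarrow> mnorm1 (At T t j) \<le> B * \<theta> ^ nat \<bar>j\<bar>"
    and A_C1: "\<And>j p q. \<exists>D. C1_on_unit_with (\<lambda>u. A u j $ p $ q) D
                  \<and> (\<forall>u\<in>{0..1}. \<bar>D u\<bar> \<le> B * \<theta> ^ nat \<bar>j\<bar>)"
    and A_bound: "\<And>j p q u. u \<in> {0..1} \<Longrightarrow> \<bar>A u j $ p $ q\<bar> \<le> B * \<theta> ^ nat \<bar>j\<bar>"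
    and At_A: "\<And>T t j. 1 \<le> t \<Longrightarrow> t \<le> int T \<Longrightarrow>
                 real T * mnorm1 (At T t j - A (real_of_int t / real T) j) \<le> B * \<theta> ^ nat \<bar>j\<bar>"
    \<comment> \<open>(W): weights\<close>
    and w_nonneg: "\<And>T t. 0 \<le> w T t"
    and w_support: "\<And>T t. t < 1 \<or> t > int T \<Longrightarrow> w T t = 0"
    and dT_def: "\<And>T. dT T = card {t. 0 < w T t}"
    and dT_inf: "filterlim (\<lambda>T. real (dT T)) at_top sequentially"
    and w_bound: "\<And>T t. w T t \<le> Cw / sqrt (real (dT T))"
    \<comment> \<open>(F1)\<close>
    and S_cpt: "compact_semimetric S \<rho>"
    and s1: "s1 \<in> S" and s2: "s2 \<in> S"
    and f_Lip: "\<And>s x y. s \<in> S \<Longrightarrow> \<bar>f s x - f s y\<bar> \<le> CLip * l1norm (x - y)"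
    and delta: "0 < \<delta>" "\<delta> < 1/2"
    and moments: "\<exists>C::real. \<forall>s\<in>S.
         (\<forall>T t. 1 \<le> t \<longrightarrow> t \<le> int T \<longrightarrow>
            (\<integral>\<^sup>+\<omega>. ennreal (\<bar>f s (LSX \<mu> At \<epsilon> T t \<omega>)\<bar> powr (2 + \<delta>)) \<partial>M) \<le> ennreal C
          \<and> (\<forall>m. (\<integral>\<^sup>+\<omega>. ennreal (\<bar>f s (LSX_trunc \<mu> At \<epsilon> m T t \<omega>)\<bar> powr (2 + \<delta>)) \<partial>M) \<le> ennreal C))
       \<and> (\<forall>u\<in>{0..1}.
            (\<integral>\<^sup>+\<omega>. ennreal (\<bar>f s (SX \<mu> A \<epsilon> u 0 \<omega>)\<bar> powr (2 + \<delta>)) \<partial>M) \<le> ennreal C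
          \<and> (\<forall>m. (\<integral>\<^sup>+\<omega>. ennreal (\<bar>f s (SX_trunc \<mu> A \<epsilon> m u 0 \<omega>)\<bar> powr (2 + \<delta>)) \<partial>M) \<le> ennreal C))"
    \<comment> \<open>the limits entering the definition of V(s1,s2)\<close>
    and L_lim: "\<And>h. (\<lambda>T. \<Sum>t=1..int T. w T t * w T (t + h) *
                   Cov M (\<lambda>\<omega>. f s1 (SX \<mu> A \<epsilon> (real_of_int t / real T) 0 \<omega>))
                         (\<lambda>\<omega>. f s2 (SX \<mu> A \<epsilon> (real_of_int t / real T) h \<omega>))) \<longlonglongrightarrow> L h"
  shows "L summable_on UNIV \<and>
    (\<lambda>T. Cov M (\<lambda>\<omega>. \<Sum>t=1..int T. w T t * f s1 (LSX \<mu> At \<epsilon> T t \<omega>))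
                (\<lambda>\<omega>. \<Sum>t=1..int T. w T t * f s2 (LSX \<mu> At \<epsilon> T t \<omega>)))
      \<longlonglongrightarrow> (\<Sum>\<^sub>\<infinity>h\<in>UNIV. L h)"
proof -
  obtain C where C: "\<forall>s\<in>S.
      (\<forall>T t. 1 \<le> t \<longrightarrow> t \<le> int T \<longrightarrow>
          abs_moment_2_plus M \<delta> (\<lambda>\<omega>. f s (LSX \<mu> At \<epsilon> T t \<omega>)) \<le> ennreal C
        \<and> (\<forall>m. abs_moment_2_plus M \<delta> (\<lambda>\<omega>. f s (LSX_trunc \<mu> At \<epsilon> m T t \<omega>)) \<le> ennreal C))
      \<and> (\<forall>u\<in>{0..1}. abs_moment_2_plus M \<delta> (\<lambda>\<omega>. f s (SX \<mu> A \<epsilon> u 0 \<omega>)) \<le> ennreal C)"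
    using moments unfolding abs_moment_2_plus_def by blast
  have C_eq: "ennreal C = ennreal (max 0 C)" by (simp add: max_def ennreal_neg)
  obtain D where D: "C1_on_unit_with \<mu> D" using mu_C1 by blast
  obtain Lmu where Lmu: "0 \<le> Lmu"
    "\<And>u v. u \<in> {0..1} \<Longrightarrow> v \<in> {0..1} \<Longrightarrow> l1norm (\<mu> u - \<mu> v) \<le> Lmu * \<bar>u - v\<bar>"
    using C1_on_unit_with_l1norm_lipschitz[OF D] by blast
  interpret ls_setting M \<epsilon> \<mu> Lmu At A \<theta> B w dT Cw S f s1 s2 CLip \<delta> "max 0 C"
    by (intro ls_setting.intro ls_setting_axioms.intro iid.intro iid_axioms.intro)
       (fact prob eps_meas eps_indep eps_ident eps_int Lmu theta At_bound A_C1 A_bound At_A w_nonneg w_support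
         dT_def w_bound s1 s2 f_Lip delta max.cobounded1 C[unfolded C_eq])+
  show ?thesis
    using Cov_weighted_sums_tendsto[of L] L_lim unfolding cov_lag_stat_def by simp
qed

end
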